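(* For any parsimonious protocol $\Pi$ on $m$ memory states, $U^R(\Pi)\le U^{RR}(p,\gamma,m)$, where \[U^{RR}(p,\gamma,m)=\begin{cases}1-\dfrac{2\sqrt{p(1-p)\gamma^{m-2}}-1}{\gamma^{m-2}-1}, & \text{if } \gamma^{m-2}>\kappa,\\[0.8em] \max\{p,1-p\}, & \text{otherwise;}\end{cases}\] the inequality is strict if $m\ge4$ and $\gamma^{m-2}>\kappa$.
   Context: Setting. The state of nature is $\theta\in\Theta=\{H,L\}$ with prior $\Pr(\theta=H)=p\in(0,1)$. A sender privately observes $\theta$; a receiver does not. $S$ is a finite signal set; conditional on $\theta$, signals are i.i.d. with distribution $\pi_\theta$ on $S$, where $\pi_\theta(s)>0$ for all $s\in S,\theta\in\Theta$, and $\pi_H\neq\pi_L$. The receiver has the set of memory states $M=\{1,\dots,m\}$ and chooses a protocol $\Pi=(f,g,a)$: a transition function $f:M\times S\to\Delta(M)$ ($f(i,s)(j)$ is the probability of moving from memory state $i$ to $j$ after signal $s$), an initial distribution $g\in\Delta(M)$ of $m_0$, and an action rule $a:M\to[0,1]$ (probability of action $H$ if the game ends in that memory state). A sender strategy is $\sigma:M\times\Theta\to[0,1]$, the probability of stopping in the current memory state given $\theta$. Timing: $m_0\sim g$; in each period $t=0,1,\dots$, with current memory state $m_t$, the game ends if $m_t$ is absorbing ($f(m_t,s)(m_t)=1$ for all $s$); otherwise the sender stops with probability $\sigma(m_t,\theta)$, ending the game; if not stopped, a signal $s_t\sim\pi_\theta$ is generated and $m_{t+1}\sim f(m_t,s_t)$.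 When the game ends in state $m_t$ the receiver takes action $H$ with probability $a(m_t)$ and $L$ otherwise. The receiver's payoff is $1$ if the action equals $\theta$ and $0$ otherwise; the sender's payoff is $1$ if the action is $H$ and $0$ otherwise; there is no discounting; if the game never ends both get $0$. $U^R(\Pi):=U^R(\Pi,\sigma)$ for a sender best response $\sigma$. Absorbing/transient refer to the Markov chain on $M$ induced by $f$ with signals from $\pi_\theta$ (by full support this does not depend on $\theta$). A protocol is parsimonious if (i) it has exactly two absorbing memory states, one with $a=0$ and one with $a=1$, and (ii) all other memory states are transient with $a=0$. $\bar\ell=\max_{s}\pi_H(s)/\pi_L(s)$, $\underline\ell=\min_{s}\pi_H(s)/\pi_L(s)$, $\gamma=\bar\ell/\underline\ell\in(1,\infty)$; $\kappa=\max\{p/(1-p),(1-p)/p\}$. *)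

theory Defs
  imports Complex_Main
begin

text \<open>Memory states are 0,...,m-1 (the paper's 1,...,m). The state of nature is
  encoded as bool: True = H, False = L.
  A protocol is a triple (f, g, a); f i s k = probability of moving from i to k
  after signal s.\<close>

definition valid_signal_dist :: "('s::finite \<Rightarrow> real) \<Rightarrow> bool" where
  "valid_signal_dist \<pi> \<longleftrightarrow> (\<forall>s. \<pi> s > 0) \<and> (\<Sum>s\<in>UNIV. \<pi> s) = 1"

definition valid_protocol ::
  "nat \<Rightarrow> (nat \<Rightarrow> 's::finite \<Rightarrow> nat \<Rightarrow> real) \<Rightarrow> (nat \<Rightarrow> real) \<Rightarrow> (nat \<Rightarrow> real) \<Rightarrow> bool" where
  "valid_protocol m f g a \<longleftrightarrow>
     (\<forall>i<m. \<forall>s. (\<forall>k<m. f i s k \<ge> 0) \<and> (\<Sum>k<m. f i s k) = 1) \<and>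
     (\<forall>j<m. g j \<ge> 0) \<and> (\<Sum>j<m. g j) = 1 \<and>
     (\<forall>j<m. 0 \<le> a j \<and> a j \<le> 1)"

definition absorbing :: "(nat \<Rightarrow> 's \<Rightarrow> nat \<Rightarrow> real) \<Rightarrow> nat \<Rightarrow> bool" where
  "absorbing f i \<longleftrightarrow> (\<forall>s. f i s i = 1)"

definition chain_P :: "('s::finite \<Rightarrow> real) \<Rightarrow> (nat \<Rightarrow> 's \<Rightarrow> nat \<Rightarrow> real) \<Rightarrow> nat \<Rightarrow> nat \<Rightarrow> real" where
  "chain_P \<pi> f i k = (\<Sum>s\<in>UNIV. \<pi> s * f i s k)"

definition chain_edges :: "nat \<Rightarrow> ('s::finite \<Rightarrow> real) \<Rightarrow> (nat \<Rightarrow> 's \<Rightarrow> nat \<Rightarrow> real) \<Rightarrow> (nat \<times> nat) set" where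
  "chain_edges m \<pi> f = {(i, k). i < m \<and> k < m \<and> chain_P \<pi> f i k > 0}"

text \<open>In a finite Markov chain, a state is transient iff it can reach a state
  from which it cannot be reached back.\<close>
definition transient :: "nat \<Rightarrow> ('s::finite \<Rightarrow> real) \<Rightarrow> (nat \<Rightarrow> 's \<Rightarrow> nat \<Rightarrow> real) \<Rightarrow> nat \<Rightarrow> bool" where
  "transient m \<pi> f i \<longleftrightarrow>
     (\<exists>j. (i, j) \<in> (chain_edges m \<pi> f)\<^sup>* \<and> (j, i) \<notin> (chain_edges m \<pi> f)\<^sup>*)"

definition parsimonious ::
  "nat \<Rightarrow> ('s::finite \<Rightarrow> real) \<Rightarrow> (nat \<Rightarrow> 's \<Rightarrow> nat \<Rightarrow> real) \<Rightarrow> (nat \<Rightarrow> real) \<Rightarrow> bool" where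
  "parsimonious m \<pi> f a \<longleftrightarrow>
     (\<exists>h l. h < m \<and> l < m \<and> h \<noteq> l \<and> absorbing f h \<and> absorbing f l \<and> a h = 1 \<and> a l = 0 \<and>
        (\<forall>j<m. j \<noteq> h \<and> j \<noteq> l \<longrightarrow> \<not> absorbing f j \<and> transient m \<pi> f j \<and> a j = 0))"

text \<open>cont: probability that the game is still running and in memory state k at
  period t, given the signal distribution \<pi> (of the true state) and the sender's
  stopping probabilities sg (for the true state).\<close>
fun cont :: "nat \<Rightarrow> ('s::finite \<Rightarrow> real) \<Rightarrow> (nat \<Rightarrow> 's \<Rightarrow> nat \<Rightarrow> real) \<Rightarrow> (nat \<Rightarrow> real)
              \<Rightarrow> (nat \<Rightarrow> real) \<Rightarrow> nat \<Rightarrow> nat \<Rightarrow> real" where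
  "cont m \<pi> f g sg 0 k = (if k < m then g k else 0)"
| "cont m \<pi> f g sg (Suc t) k =
     (if k < m then
        (\<Sum>j<m. (if absorbing f j then 0 else (1 - sg j) * cont m \<pi> f g sg t j * (\<Sum>s\<in>UNIV. \<pi> s * f j s k)))
      else 0)"

definition ends :: "nat \<Rightarrow> ('s::finite \<Rightarrow> real) \<Rightarrow> (nat \<Rightarrow> 's \<Rightarrow> nat \<Rightarrow> real) \<Rightarrow> (nat \<Rightarrow> real)
              \<Rightarrow> (nat \<Rightarrow> real) \<Rightarrow> nat \<Rightarrow> nat \<Rightarrow> real" where
  "ends m \<pi> f g sg t j = cont m \<pi> f g sg t j * (if absorbing f j then 1 else sg j)"

text \<open>Probability that the receiver ends up taking action H (resp. L); if the
  game never ends, no action is taken.\<close>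
definition prob_actH :: "nat \<Rightarrow> ('s::finite \<Rightarrow> real) \<Rightarrow> (nat \<Rightarrow> 's \<Rightarrow> nat \<Rightarrow> real) \<Rightarrow> (nat \<Rightarrow> real)
              \<Rightarrow> (nat \<Rightarrow> real) \<Rightarrow> (nat \<Rightarrow> real) \<Rightarrow> real" where
  "prob_actH m \<pi> f g a sg = (\<Sum>t. \<Sum>j<m. ends m \<pi> f g sg t j * a j)"

definition prob_actL :: "nat \<Rightarrow> ('s::finite \<Rightarrow> real) \<Rightarrow> (nat \<Rightarrow> 's \<Rightarrow> nat \<Rightarrow> real) \<Rightarrow> (nat \<Rightarrow> real)
              \<Rightarrow> (nat \<Rightarrow> real) \<Rightarrow> (nat \<Rightarrow> real) \<Rightarrow> real" where
  "prob_actL m \<pi> f g a sg = (\<Sum>t. \<Sum>j<m. ends m \<pi> f g sg t j * (1 - a j))"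

definition valid_strategy :: "nat \<Rightarrow> (nat \<Rightarrow> bool \<Rightarrow> real) \<Rightarrow> bool" where
  "valid_strategy m \<sigma> \<longleftrightarrow> (\<forall>j<m. \<forall>\<theta>. 0 \<le> \<sigma> j \<theta> \<and> \<sigma> j \<theta> \<le> 1)"

definition sender_payoff :: "nat \<Rightarrow> ('s::finite \<Rightarrow> real) \<Rightarrow> ('s \<Rightarrow> real) \<Rightarrow> (nat \<Rightarrow> 's \<Rightarrow> nat \<Rightarrow> real)
     \<Rightarrow> (nat \<Rightarrow> real) \<Rightarrow> (nat \<Rightarrow> real) \<Rightarrow> (nat \<Rightarrow> bool \<Rightarrow> real) \<Rightarrow> bool \<Rightarrow> real" where
  "sender_payoff m \<pi>H \<pi>L f g a \<sigma> \<theta> =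
     prob_actH m (if \<theta> then \<pi>H else \<pi>L) f g a (\<lambda>j. \<sigma> j \<theta>)"

definition sender_best_response :: "nat \<Rightarrow> ('s::finite \<Rightarrow> real) \<Rightarrow> ('s \<Rightarrow> real) \<Rightarrow> (nat \<Rightarrow> 's \<Rightarrow> nat \<Rightarrow> real)
     \<Rightarrow> (nat \<Rightarrow> real) \<Rightarrow> (nat \<Rightarrow> real) \<Rightarrow> (nat \<Rightarrow> bool \<Rightarrow> real) \<Rightarrow> bool" where
  "sender_best_response m \<pi>H \<pi>L f g a \<sigma> \<longleftrightarrow>
     valid_strategy m \<sigma> \<and>
     (\<forall>\<sigma>' \<theta>. valid_strategy m \<sigma>' \<longrightarrow>
        sender_payoff m \<pi>H \<pi>L f g a \<sigma>' \<theta> \<le> sender_payoff m \<pi>H \<pi>L f g a \<sigma> \<theta>)"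

definition receiver_payoff :: "real \<Rightarrow> nat \<Rightarrow> ('s::finite \<Rightarrow> real) \<Rightarrow> ('s \<Rightarrow> real) \<Rightarrow> (nat \<Rightarrow> 's \<Rightarrow> nat \<Rightarrow> real)
     \<Rightarrow> (nat \<Rightarrow> real) \<Rightarrow> (nat \<Rightarrow> real) \<Rightarrow> (nat \<Rightarrow> bool \<Rightarrow> real) \<Rightarrow> real" where
  "receiver_payoff p m \<pi>H \<pi>L f g a \<sigma> =
     p * prob_actH m \<pi>H f g a (\<lambda>j. \<sigma> j True) + (1 - p) * prob_actL m \<pi>L f g a (\<lambda>j. \<sigma> j False)"

definition lbar :: "('s::finite \<Rightarrow> real) \<Rightarrow> ('s \<Rightarrow> real) \<Rightarrow> real" where
  "lbar \<pi>H \<pi>L = Max ((\<lambda>s. \<pi>H s / \<pi>L s) ` UNIV)"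

definition lunder :: "('s::finite \<Rightarrow> real) \<Rightarrow> ('s \<Rightarrow> real) \<Rightarrow> real" where
  "lunder \<pi>H \<pi>L = Min ((\<lambda>s. \<pi>H s / \<pi>L s) ` UNIV)"

definition gamma :: "('s::finite \<Rightarrow> real) \<Rightarrow> ('s \<Rightarrow> real) \<Rightarrow> real" where
  "gamma \<pi>H \<pi>L = lbar \<pi>H \<pi>L / lunder \<pi>H \<pi>L"

definition kappa :: "real \<Rightarrow> real" where
  "kappa p = max (p / (1 - p)) ((1 - p) / p)"

definition URR :: "real \<Rightarrow> real \<Rightarrow> nat \<Rightarrow> real" where
  "URR p \<gamma> m =
     (if \<gamma> ^ (m - 2) > kappa p
      then 1 - (2 * sqrt (p * (1 - p) * \<gamma> ^ (m - 2)) - 1) / (\<gamma> ^ (m - 2) - 1)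
      else max p (1 - p))"

end

theory Submission
  imports Defs
begin

text \<open>Under a parsimonious protocol only two numbers per initial memory state i matter: the
  probabilities x and y of absorption in the H-state when the sender never stops, under
  \<theta> = H and \<theta> = L. Stopping only leads to action L, so under H the sender cannot do better
  than never stopping, while under L a best response does at least as well as never stopping;
  hence the receiver gets at most the g-average of p x + (1 - p) (1 - y).

  The heart of the proof is the odds bound x (1 - y) \<le> \<gamma>^(m - 2) y (1 - x). Compare the
  expected numbers of visits N_H, N_L to the m - 2 transient states. Their ratio takes at
  most m - 2 values; conservation of the expected flow across the set where the ratio exceeds
  a given value shows that consecutive values differ at most by the factor \<gamma>, and the exits
  into the two absorbing states change the ratio by a factor between lunder and lbar.
  A finer flow estimate for the level set of the largest ratio makes the bound strict when
  m \<ge> 4. Maximising p x + (1 - p) (1 - y) under the odds bound by weighted AM-GM gives URR.\<close>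

section \<open>Likelihood ratios of two occupation measures\<close>

text \<open>The bookkeeping behind exit_NH_less: A and B are the L-flows into an exit state from
  S and from the other transient states, C is the remaining L-flow out of S, and X is the
  H-flow from S into the exit.\<close>
lemma exit_flow_inequality:
  fixes A B C X Nt v1 v2 lo hi :: real
  assumes A: "0 \<le> A" and B: "0 \<le> B" and C: "0 \<le> C" and AB: "0 < A + B"
    and lo: "0 < lo" and lo_hi: "lo < hi" and v1: "0 \<le> v1" and v2: "0 < v2"
    and Nt: "Nt \<le> X + hi * v2 * B"
    and out: "X + lo * v1 * C \<le> hi * v2 * (A + C)"
    and X_le: "X \<le> hi * v1 * A" and X_ge: "lo * v1 * A \<le> X"
  shows "lo * Nt < hi * hi * v2 * (A + B)"
proof -
  have hv2: "0 < hi * v2" using lo lo_hi v2 by simp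
  have X_bound: "lo * X \<le> hi * hi * v2 * A \<and> (0 < A \<longrightarrow> lo * X < hi * hi * v2 * A)"
  proof (cases "lo * v1 < hi * v2")
    case True
    have "lo * X \<le> hi * A * (lo * v1)" using mult_left_mono[OF X_le, of lo] lo by (simp add: algebra_simps)
    moreover have "hi * A * (lo * v1) \<le> hi * A * (hi * v2)" using True A lo lo_hi by (intro mult_left_mono) auto
    moreover have "0 < A \<Longrightarrow> hi * A * (lo * v1) < hi * A * (hi * v2)" using True lo lo_hi by simp
    moreover have "hi * A * (hi * v2) = hi * hi * v2 * A" by simp
    ultimately show ?thesis by linarith
  next
    case False
    have "(hi * v2 - lo * v1) * C \<le> 0" using False C by (simp add: mult_nonpos_nonneg)
    then have "X \<le> hi * v2 * A" using out by (simp add: algebra_simps)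
    then have "lo * X \<le> lo * (hi * v2 * A)" using lo by simp
    moreover have "lo * (hi * v2 * A) \<le> hi * (hi * v2 * A)" using lo_hi hv2 A by (intro mult_right_mono) auto
    moreover have "lo * (hi * v2 * A) < hi * (hi * v2 * A)" if "0 < A"
      using lo_hi hv2 that by (intro mult_strict_right_mono) auto
    moreover have "hi * (hi * v2 * A) = hi * hi * v2 * A" by simp
    ultimately show ?thesis by linarith
  qed
  have "lo * Nt \<le> lo * X + lo * (hi * v2 * B)" using mult_left_mono[OF Nt, of lo] lo by (simp add: algebra_simps)
  moreover have "lo * (hi * v2 * B) \<le> hi * (hi * v2 * B)" using lo_hi hv2 B by (intro mult_right_mono) auto
  moreover have "lo * (hi * v2 * B) < hi * (hi * v2 * B)" if "0 < B"
    using lo_hi hv2 that by (intro mult_strict_right_mono) auto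
  moreover have "B = 0 \<Longrightarrow> 0 < A" using AB by simp
  moreover have "hi * hi * v2 * A + hi * (hi * v2 * B) = hi * hi * v2 * (A + B)"
    by (simp add: algebra_simps)
  ultimately show ?thesis using X_bound B by (cases "B = 0") linarith+
qed

definition flow :: "(nat \<Rightarrow> real) \<Rightarrow> (nat \<Rightarrow> nat \<Rightarrow> real) \<Rightarrow> nat set \<Rightarrow> nat set \<Rightarrow> real" where
  "flow N P A B = (\<Sum>y\<in>A. \<Sum>x\<in>B. N y * P y x)"

lemma flow_split_source:
  "finite A \<Longrightarrow> S \<subseteq> A \<Longrightarrow> flow N P A B = flow N P S B + flow N P (A - S) B"
  unfolding flow_def by (simp add: sum.subset_diff)

lemma flow_split_target:
  "finite B \<Longrightarrow> S \<subseteq> B \<Longrightarrow> flow N P A B = flow N P A S + flow N P A (B - S)"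
  unfolding flow_def by (simp add: sum.subset_diff sum.distrib)

lemma flow_out_eq_flow_in:
  fixes N :: "nat \<Rightarrow> real" and P :: "nat \<Rightarrow> nat \<Rightarrow> real"
  assumes "finite X" "T \<subseteq> X" "S \<subseteq> T" "i0 \<notin> S"
    and stochastic: "\<And>y. y \<in> T \<Longrightarrow> (\<Sum>x\<in>X. P y x) = 1"
    and balance: "\<And>x. x \<in> X \<Longrightarrow> N x = (if x = i0 then 1 else 0) + (\<Sum>y\<in>T. N y * P y x)"
  shows "flow N P S (X - S) = flow N P (T - S) S"
proof -
  have fin_T: "finite T" using assms(1,2) by (rule rev_finite_subset)
  have SX: "S \<subseteq> X" using assms(2,3) by blast
  have "(\<Sum>x\<in>S. N x) = (\<Sum>x\<in>S. \<Sum>y\<in>T. N y * P y x)"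
    using balance SX assms(4) by (intro sum.cong refl) (auto simp: subset_iff)
  also have "\<dots> = flow N P T S" unfolding flow_def by (rule sum.swap)
  also have "\<dots> = flow N P S S + flow N P (T - S) S" by (rule flow_split_source[OF fin_T assms(3)])
  finally have into: "(\<Sum>x\<in>S. N x) = flow N P S S + flow N P (T - S) S" .
  have "(\<Sum>y\<in>S. N y) = flow N P S X"
    unfolding flow_def using stochastic assms(3)
    by (intro sum.cong refl) (auto simp: subset_iff simp flip: sum_distrib_left)
  also have "\<dots> = flow N P S S + flow N P S (X - S)" by (rule flow_split_target[OF assms(1) SX])
  finally show ?thesis using into by simp
qed

text \<open>NH and NL are the expected numbers of visits, starting from i0, of two chains with
  transition kernels PH and PL that are stopped on leaving T; the likelihood ratios of the
  transitions lie in [lo, hi].\<close>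
locale occupation_pair =
  fixes X T :: "nat set" and i0 :: nat
    and NH NL :: "nat \<Rightarrow> real" and PH PL :: "nat \<Rightarrow> nat \<Rightarrow> real" and lo hi :: real
  assumes finite_X: "finite X" and T_subset: "T \<subseteq> X" and i0_in_T: "i0 \<in> T"
    and NH_nonneg: "\<And>x. x \<in> X \<Longrightarrow> 0 \<le> NH x" and NL_nonneg: "\<And>x. x \<in> X \<Longrightarrow> 0 \<le> NL x"
    and PH_nonneg: "\<And>y x. y \<in> T \<Longrightarrow> x \<in> X \<Longrightarrow> 0 \<le> PH y x"
    and PL_nonneg: "\<And>y x. y \<in> T \<Longrightarrow> x \<in> X \<Longrightarrow> 0 \<le> PL y x"
    and PH_stochastic: "\<And>y. y \<in> T \<Longrightarrow> (\<Sum>x\<in>X. PH y x) = 1"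
    and PL_stochastic: "\<And>y. y \<in> T \<Longrightarrow> (\<Sum>x\<in>X. PL y x) = 1"
    and lo_pos: "0 < lo" and lo_less_hi: "lo < hi"
    and PH_ge: "\<And>y x. y \<in> T \<Longrightarrow> x \<in> X \<Longrightarrow> lo * PL y x \<le> PH y x"
    and PH_le: "\<And>y x. y \<in> T \<Longrightarrow> x \<in> X \<Longrightarrow> PH y x \<le> hi * PL y x"
    and NH_balance: "\<And>x. x \<in> X \<Longrightarrow> NH x = (if x = i0 then 1 else 0) + (\<Sum>y\<in>T. NH y * PH y x)"
    and NL_balance: "\<And>x. x \<in> X \<Longrightarrow> NL x = (if x = i0 then 1 else 0) + (\<Sum>y\<in>T. NL y * PL y x)"
    and NH_pos_iff: "\<And>x. x \<in> X \<Longrightarrow> 0 < NH x \<longleftrightarrow> 0 < NL x"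
    and inflow_H_pos: "\<And>S. S \<subseteq> T \<Longrightarrow> i0 \<notin> S \<Longrightarrow> \<exists>z\<in>S. 0 < NH z \<Longrightarrow> 0 < flow NH PH (T - S) S"
    and inflow_L_pos: "\<And>S. S \<subseteq> T \<Longrightarrow> i0 \<notin> S \<Longrightarrow> \<exists>z\<in>S. 0 < NL z \<Longrightarrow> 0 < flow NL PL (T - S) S"
begin

lemma occupation_pair_swap: "occupation_pair X T i0 NL NH PL PH (1 / hi) (1 / lo)"
proof
  fix y x assume "y \<in> T" "x \<in> X"
  then show "1 / hi * PH y x \<le> PL y x" and "PL y x \<le> 1 / lo * PH y x"
    using PH_le[of y x] PH_ge[of y x] lo_pos lo_less_hi by (simp_all add: field_simps)
next
  show "0 < 1 / hi" and "1 / hi < 1 / lo" using lo_pos lo_less_hi by (simp_all add: field_simps)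
qed (use finite_X T_subset i0_in_T NH_nonneg NL_nonneg PH_nonneg PL_nonneg PH_stochastic
      PL_stochastic NH_balance NL_balance NH_pos_iff inflow_H_pos inflow_L_pos in auto)

lemma finite_T: "finite T"
  using finite_X T_subset by (rule rev_finite_subset)

lemma exit_eq_inflow:
  assumes "t \<in> X - T"
  shows "NH t = flow NH PH T {t}" and "NL t = flow NL PL T {t}"
  using assms NH_balance[of t] NL_balance[of t] i0_in_T by (auto simp: flow_def)

lemma flow_H_le:
  assumes "A \<subseteq> T" "B \<subseteq> X" "0 \<le> c" "\<And>y. y \<in> A \<Longrightarrow> NH y \<le> c * NL y"
  shows "flow NH PH A B \<le> hi * c * flow NL PL A B"
  unfolding flow_def sum_distrib_left
proof (intro sum_mono)
  fix y x assume "y \<in> A" "x \<in> B"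
  then have "NH y * PH y x \<le> (c * NL y) * (hi * PL y x)"
    using assms PH_le[of y x] NL_nonneg[of y] PH_nonneg[of y x] T_subset by (intro mult_mono) auto
  then show "NH y * PH y x \<le> hi * c * (NL y * PL y x)" by (simp add: algebra_simps)
qed

lemma flow_H_ge:
  assumes "A \<subseteq> T" "B \<subseteq> X" "0 \<le> c" "\<And>y. y \<in> A \<Longrightarrow> c * NL y \<le> NH y"
  shows "lo * c * flow NL PL A B \<le> flow NH PH A B"
  unfolding flow_def sum_distrib_left
proof (intro sum_mono)
  fix y x assume "y \<in> A" "x \<in> B"
  then have "(c * NL y) * (lo * PL y x) \<le> NH y * PH y x"
    using assms PH_ge[of y x] NH_nonneg[of y] PL_nonneg[of y x] NL_nonneg[of y] T_subset lo_pos
    by (intro mult_mono) (auto simp: subset_iff)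
  then show "lo * c * (NL y * PL y x) \<le> NH y * PH y x" by (simp add: algebra_simps)
qed

lemma flow_L_nonneg: "A \<subseteq> T \<Longrightarrow> B \<subseteq> X \<Longrightarrow> 0 \<le> flow NL PL A B"
  unfolding flow_def using NL_nonneg PL_nonneg T_subset
  by (intro sum_nonneg mult_nonneg_nonneg) (auto simp: subset_iff)

lemma flow_H_out_eq_in: "S \<subseteq> T \<Longrightarrow> i0 \<notin> S \<Longrightarrow> flow NH PH S (X - S) = flow NH PH (T - S) S"
  using flow_out_eq_flow_in finite_X T_subset PH_stochastic NH_balance by blast

lemma flow_L_out_eq_in: "S \<subseteq> T \<Longrightarrow> i0 \<notin> S \<Longrightarrow> flow NL PL S (X - S) = flow NL PL (T - S) S"
  using flow_out_eq_flow_in finite_X T_subset PL_stochastic NL_balance by blast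

definition ratio :: "nat \<Rightarrow> real" where
  "ratio y = NH y / NL y"

definition visited :: "nat set" where
  "visited = {y\<in>T. 0 < NL y}"

definition ratios :: "real set" where
  "ratios = ratio ` visited"

lemma finite_ratios: "finite ratios"
  unfolding ratios_def visited_def using finite_T by simp

lemma i0_visited: "i0 \<in> visited"
proof -
  have "0 \<le> (\<Sum>y\<in>T. NL y * PL y i0)"
    using NL_nonneg PL_nonneg T_subset i0_in_T by (intro sum_nonneg mult_nonneg_nonneg) auto
  then show ?thesis using NL_balance[of i0] i0_in_T T_subset unfolding visited_def by auto
qed

lemma ratio_pos: "y \<in> visited \<Longrightarrow> 0 < ratio y"
  unfolding visited_def ratio_def using NH_pos_iff T_subset by auto

lemma card_ratios_le: "card ratios \<le> card T"
  unfolding ratios_def visited_def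
  by (rule order.trans[OF card_image_le card_mono]) (use finite_T in auto)

lemma NH_le_if_ratio_le:
  assumes "y \<in> X" "0 < NL y \<Longrightarrow> ratio y \<le> c"
  shows "NH y \<le> c * NL y"
proof (cases "0 < NL y")
  case True
  then show ?thesis using assms by (simp add: ratio_def pos_divide_le_eq)
next
  case False
  then show ?thesis using assms NH_pos_iff NH_nonneg NL_nonneg by force
qed

lemma NH_ge_if_ratio_ge:
  assumes "y \<in> X" "0 < NL y \<Longrightarrow> c \<le> ratio y"
  shows "c * NL y \<le> NH y"
proof (cases "0 < NL y")
  case True
  then show ?thesis using assms by (simp add: ratio_def pos_le_divide_eq)
next
  case False
  then show ?thesis using assms NH_pos_iff NH_nonneg NL_nonneg by force
qed

lemma ratio_cut:
  assumes S: "S \<subseteq> T" and c: "0 \<le> c" and c': "0 \<le> c'"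
    and inside: "\<And>y. y \<in> S \<Longrightarrow> c' * NL y \<le> NH y"
    and outside: "\<And>y. y \<in> T - S \<Longrightarrow> NH y \<le> c * NL y"
    and nontrivial: "if i0 \<in> S then \<exists>z\<in>T - S. 0 < NL z else \<exists>z\<in>S. 0 < NL z"
  shows "lo * c' \<le> hi * c"
proof (cases "i0 \<in> S")
  case False
  let ?F = "flow NL PL (T - S) S"
  have "lo * c' * ?F = lo * c' * flow NL PL S (X - S)" using flow_L_out_eq_in S False by simp
  also have "\<dots> \<le> flow NH PH S (X - S)" using S T_subset c' inside by (intro flow_H_ge) auto
  also have "\<dots> = flow NH PH (T - S) S" using flow_H_out_eq_in S False by simp
  also have "\<dots> \<le> hi * c * ?F" using S T_subset c outside by (intro flow_H_le) auto
  finally show ?thesis using inflow_L_pos[OF S False] nontrivial False by simp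
next
  case True
  define U where "U = T - S"
  have U: "U \<subseteq> T" "i0 \<notin> U" "T - U = S" unfolding U_def using S True by auto
  let ?F = "flow NL PL S U"
  have "lo * c' * ?F \<le> flow NH PH S U" using S T_subset c' inside U by (intro flow_H_ge) auto
  also have "\<dots> = flow NH PH U (X - U)" using flow_H_out_eq_in U by simp
  also have "\<dots> \<le> hi * c * flow NL PL U (X - U)" using U_def c outside by (intro flow_H_le) auto
  also have "flow NL PL U (X - U) = ?F" using flow_L_out_eq_in U by simp
  finally show ?thesis using inflow_L_pos[OF U(1,2)] nontrivial True U by (simp add: U_def)
qed

lemma ratio_gap:
  assumes c: "c \<in> ratios" and c': "c' \<in> ratios" "c < c'"
    and next_value: "\<And>v. v \<in> ratios \<Longrightarrow> c < v \<Longrightarrow> c' \<le> v"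
  shows "c' \<le> hi / lo * c"
proof -
  define S where "S = {y\<in>visited. c < ratio y}"
  have "0 < c" using c ratio_pos unfolding ratios_def by auto
  moreover have "c' * NL y \<le> NH y" if "y \<in> S" for y
    using that T_subset next_value unfolding S_def ratios_def visited_def
    by (intro NH_ge_if_ratio_ge) auto
  moreover have "NH y \<le> c * NL y" if "y \<in> T - S" for y
    using that T_subset unfolding S_def visited_def by (intro NH_le_if_ratio_le) auto
  moreover have "if i0 \<in> S then \<exists>z\<in>T - S. 0 < NL z else \<exists>z\<in>S. 0 < NL z"
    using c c' unfolding S_def ratios_def visited_def by auto
  ultimately have "lo * c' \<le> hi * c"
    using c' by (intro ratio_cut[of S]) (auto simp: S_def visited_def)
  then show ?thesis using lo_pos by (simp add: field_simps)
qed

lemma ratio_chain: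
  assumes "c \<in> ratios" "d \<in> ratios" "c \<le> d"
  shows "d \<le> (hi / lo) ^ card {v\<in>ratios. c < v \<and> v \<le> d} * c"
  using assms
proof (induction "card {v\<in>ratios. c < v \<and> v \<le> d}" arbitrary: c)
  case 0
  then have "d = c" using finite_ratios by force
  then show ?case using "0.hyps" by simp
next
  case (Suc n)
  define W where "W = {v\<in>ratios. c < v \<and> v \<le> d}"
  have W: "finite W" "W \<noteq> {}"
    using finite_ratios Suc.hyps(2) unfolding W_def by (simp, metis card.empty nat.distinct(1))
  define c' where "c' = Min W"
  have c': "c' \<in> ratios" "c < c'" "c' \<le> d" using Min_in[OF W] unfolding c'_def W_def by auto
  have c'_le: "\<And>v. v \<in> W \<Longrightarrow> c' \<le> v" unfolding c'_def using W by simp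
  have "c' \<le> hi / lo * c"
  proof (rule ratio_gap[OF Suc.prems(1) c'(1,2)])
    fix v assume "v \<in> ratios" "c < v"
    then show "c' \<le> v" using c'_le c'(3) unfolding W_def by (cases "v \<le> d") auto
  qed
  moreover have "{v\<in>ratios. c' < v \<and> v \<le> d} = W - {c'}"
    using c'(2) c'_le unfolding W_def by force
  then have "n = card {v\<in>ratios. c' < v \<and> v \<le> d}"
    using Suc.hyps(2) W c' unfolding W_def c'_def by simp
  then have "d \<le> (hi / lo) ^ n * c'" using Suc.hyps(1) c' Suc.prems(2) by blast
  moreover have "0 \<le> hi / lo" using lo_pos lo_less_hi by simp
  ultimately have "d \<le> (hi / lo) ^ n * (hi / lo * c)" by (meson order.trans mult_left_mono zero_le_power)
  then show ?case by (simp flip: Suc.hyps(2) add: mult_ac)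
qed

lemma exit_NH_le:
  assumes "t \<in> X - T" "0 \<le> c" "\<And>y. y \<in> T \<Longrightarrow> NH y \<le> c * NL y"
  shows "NH t \<le> hi * c * NL t"
  using flow_H_le[of T "{t}" c] assms exit_eq_inflow[OF assms(1)] by simp

lemma exit_NH_ge:
  assumes "t \<in> X - T" "0 \<le> c" "\<And>y. y \<in> T \<Longrightarrow> c * NL y \<le> NH y"
  shows "lo * c * NL t \<le> NH t"
  using flow_H_ge[of T "{t}" c] assms exit_eq_inflow[OF assms(1)] by simp

text \<open>With S the level set of the largest ratio v1 and v2 the next ratio, flow conservation
  for S prevents the exit state t from inheriting the ratio v1.\<close>
lemma exit_NH_less:
  assumes S: "S \<subseteq> T" "i0 \<notin> S" and t: "t \<in> X - T" "0 < NL t" and v: "0 \<le> v1" "0 < v2"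
    and top: "\<And>y. y \<in> S \<Longrightarrow> NH y = v1 * NL y"
    and rest: "\<And>y. y \<in> T - S \<Longrightarrow> NH y \<le> v2 * NL y"
  shows "lo * NH t < hi * hi * v2 * NL t"
proof -
  have tS: "{t} \<subseteq> X - S" using t S T_subset by auto
  define A where "A = flow NL PL S {t}"
  define B where "B = flow NL PL (T - S) {t}"
  define C where "C = flow NL PL S (X - S - {t})"
  define Xt where "Xt = flow NH PH S {t}"
  have NL_t: "NL t = A + B"
    using exit_eq_inflow(2)[OF t(1)] flow_split_source[OF finite_T S(1)] by (simp add: A_def B_def)
  have "NH t = Xt + flow NH PH (T - S) {t}"
    using exit_eq_inflow(1)[OF t(1)] flow_split_source[OF finite_T S(1)] by (simp add: Xt_def)
  moreover have "flow NH PH (T - S) {t} \<le> hi * v2 * B"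
    unfolding B_def using t v rest by (intro flow_H_le) auto
  ultimately have NH_t: "NH t \<le> Xt + hi * v2 * B" by simp
  have out_L: "flow NL PL S (X - S) = A + C"
    using flow_split_target[OF _ tS] finite_X by (simp add: A_def C_def)
  have "Xt + lo * v1 * C \<le> Xt + flow NH PH S (X - S - {t})"
    unfolding C_def using S T_subset v top by (intro add_left_mono flow_H_ge) auto
  also have "\<dots> = flow NH PH (T - S) S"
    using flow_split_target[OF _ tS] finite_X flow_H_out_eq_in[OF S] by (simp add: Xt_def)
  also have "\<dots> \<le> hi * v2 * flow NL PL (T - S) S" using S T_subset v rest by (intro flow_H_le) auto
  also have "flow NL PL (T - S) S = A + C" using flow_L_out_eq_in[OF S] out_L by simp
  finally have out: "Xt + lo * v1 * C \<le> hi * v2 * (A + C)" .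
  have "Xt \<le> hi * v1 * A" and "lo * v1 * A \<le> Xt"
    unfolding Xt_def A_def using S t v top by (auto intro!: flow_H_le flow_H_ge)
  moreover have "0 \<le> A" "0 \<le> B" "0 \<le> C"
    unfolding A_def B_def C_def using S t T_subset by (auto intro!: flow_L_nonneg)
  ultimately show ?thesis
    using exit_flow_inequality[OF _ _ _ _ lo_pos lo_less_hi v NH_t out] NL_t t(2) by simp
qed

definition min_ratio :: real where
  "min_ratio = Min ratios"

definition max_ratio :: real where
  "max_ratio = Max ratios"

lemma ratios_nonempty: "ratios \<noteq> {}"
  unfolding ratios_def using i0_visited by auto

lemma min_ratio: "min_ratio \<in> ratios" "\<And>v. v \<in> ratios \<Longrightarrow> min_ratio \<le> v"
  unfolding min_ratio_def using finite_ratios ratios_nonempty by auto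

lemma max_ratio: "max_ratio \<in> ratios" "\<And>v. v \<in> ratios \<Longrightarrow> v \<le> max_ratio"
  unfolding max_ratio_def using finite_ratios ratios_nonempty by auto

lemma min_ratio_pos: "0 < min_ratio"
  using min_ratio(1) ratio_pos unfolding ratios_def by auto

lemma exit_NH_le_max_ratio: "t \<in> X - T \<Longrightarrow> NH t \<le> hi * max_ratio * NL t"
  using min_ratio_pos min_ratio(2)[OF max_ratio(1)] max_ratio(2) T_subset
  by (intro exit_NH_le NH_le_if_ratio_le) (auto simp: ratios_def visited_def)

lemma exit_NH_ge_min_ratio: "t \<in> X - T \<Longrightarrow> lo * min_ratio * NL t \<le> NH t"
  using min_ratio_pos min_ratio(2) T_subset
  by (intro exit_NH_ge NH_ge_if_ratio_ge) (auto simp: ratios_def visited_def)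

lemma exit_odds_le_card_ratios:
  assumes h: "h \<in> X - T" and l: "l \<in> X - T"
  shows "NH h * NL l \<le> (hi / lo) ^ card ratios * (NL h * NH l)"
proof -
  let ?g = "hi / lo" and ?q = "card ratios"
  have "{v\<in>ratios. min_ratio < v \<and> v \<le> max_ratio} = ratios - {min_ratio}"
    using min_ratio max_ratio by force
  then have chain: "max_ratio \<le> ?g ^ (?q - 1) * min_ratio"
    using ratio_chain[OF min_ratio(1) max_ratio(1) min_ratio(2)[OF max_ratio(1)]]
      min_ratio(1) finite_ratios by simp
  have nonneg: "0 \<le> NH h" "0 \<le> NH l" "0 \<le> NL h" using h l NH_nonneg NL_nonneg by auto
  have "lo * min_ratio * (NH h * NL l) = NH h * (lo * min_ratio * NL l)" by simp
  also have "\<dots> \<le> NH h * NH l" using exit_NH_ge_min_ratio[OF l] nonneg by (intro mult_left_mono)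
  also have "\<dots> \<le> (hi * max_ratio * NL h) * NH l"
    using exit_NH_le_max_ratio[OF h] nonneg by (intro mult_right_mono)
  also have "\<dots> \<le> (hi * (?g ^ (?q - 1) * min_ratio) * NL h) * NH l"
    using chain lo_pos lo_less_hi nonneg by (intro mult_right_mono mult_left_mono) auto
  also have "\<dots> = lo * min_ratio * (?g ^ ?q * (NL h * NH l))"
    using lo_pos finite_ratios ratios_nonempty by (simp add: power_eq_if field_simps)
  finally show ?thesis using lo_pos min_ratio_pos by simp
qed

lemma exit_odds_le:
  assumes "h \<in> X - T" "l \<in> X - T"
  shows "NH h * NL l \<le> (hi / lo) ^ card T * (NL h * NH l)"
proof -
  have "(hi / lo) ^ card ratios \<le> (hi / lo) ^ card T"
    using card_ratios_le lo_pos lo_less_hi by (intro power_increasing) auto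
  moreover have "0 \<le> NL h * NH l" using assms NH_nonneg NL_nonneg by simp
  ultimately show ?thesis
    using exit_odds_le_card_ratios[OF assms] by (meson mult_right_mono order.trans)
qed

definition second_ratio :: real where
  "second_ratio = Max (ratios - {max_ratio})"

text \<open>The hypothesis avoids ratio so that it transfers literally to the swapped pair.\<close>
context
  assumes i0_below_top: "\<exists>y\<in>T. 0 < NL y \<and> NH i0 / NL i0 < NH y / NL y"
begin

lemma ratio_i0_less_max: "ratio i0 < max_ratio"
  using i0_below_top max_ratio(2) unfolding ratios_def visited_def ratio_def by force

lemma second_ratio: "second_ratio \<in> ratios - {max_ratio}"
  "\<And>v. v \<in> ratios - {max_ratio} \<Longrightarrow> v \<le> second_ratio"
proof -
  have "ratio i0 \<in> ratios - {max_ratio}" using i0_visited ratio_i0_less_max ratios_def by auto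
  then show "second_ratio \<in> ratios - {max_ratio}" "\<And>v. v \<in> ratios - {max_ratio} \<Longrightarrow> v \<le> second_ratio"
    unfolding second_ratio_def using finite_ratios by (metis Max_in empty_iff finite_Diff, simp)
qed

lemma second_ratio_less_max: "second_ratio < max_ratio"
  using second_ratio(1) max_ratio(2) by force

lemma min_ratio_less_max: "min_ratio < max_ratio"
  using min_ratio(2)[OF second_ratio(1)[THEN DiffD1]] second_ratio_less_max by simp

lemma exit_NH_less_second_ratio:
  assumes "h \<in> X - T" "0 < NL h"
  shows "lo * NH h < hi * hi * second_ratio * NL h"
proof -
  define S where "S = {y\<in>visited. ratio y = max_ratio}"
  show ?thesis
  proof (rule exit_NH_less[OF _ _ assms])
    show "S \<subseteq> T" "i0 \<notin> S" using ratio_i0_less_max unfolding S_def visited_def by auto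
    show "0 \<le> max_ratio" "0 < second_ratio"
      using min_ratio_pos min_ratio_less_max second_ratio(1) ratio_pos ratios_def by auto
    show "NH y = max_ratio * NL y" if "y \<in> S" for y
      using that unfolding S_def visited_def ratio_def by (auto simp: field_simps)
    show "NH y \<le> second_ratio * NL y" if "y \<in> T - S" for y
      using that T_subset second_ratio(2) unfolding S_def visited_def ratios_def
      by (intro NH_le_if_ratio_le) auto
  qed
qed

lemma card_ratios_ge_2: "2 \<le> card ratios"
proof -
  have "card {min_ratio, max_ratio} \<le> card ratios"
    using min_ratio(1) max_ratio(1) finite_ratios by (intro card_mono) auto
  then show ?thesis using min_ratio_less_max by simp
qed

lemma second_ratio_le: "second_ratio \<le> (hi / lo) ^ (card ratios - 2) * min_ratio"
proof -
  have "{v\<in>ratios. min_ratio < v \<and> v \<le> second_ratio} = ratios - {min_ratio, max_ratio}"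
    using min_ratio(2) max_ratio(2) second_ratio second_ratio_less_max by force
  moreover have "card (ratios - {min_ratio, max_ratio}) = card ratios - 2"
    using min_ratio(1) max_ratio(1) min_ratio_less_max finite_ratios by (simp add: card_Diff_subset)
  ultimately show ?thesis
    using ratio_chain[OF min_ratio(1), of second_ratio] second_ratio(1) min_ratio(2) by simp
qed

lemma exit_odds_less_below_top:
  assumes h: "h \<in> X - T" "0 < NL h" and l: "l \<in> X - T" "0 < NL l"
  shows "NH h * NL l < (hi / lo) ^ card T * (NL h * NH l)"
proof -
  let ?g = "hi / lo" and ?q = "card ratios"
  have pow: "?g ^ ?q = ?g ^ 2 * ?g ^ (?q - 2)"
    using card_ratios_ge_2 by (metis le_add_diff_inverse power_add)
  have nonneg: "0 \<le> NH h" "0 \<le> NL h" and NH_l: "0 < NH l" using h l NH_nonneg NL_nonneg NH_pos_iff by auto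
  have "lo * lo * min_ratio * (NH h * NL l) = (lo * NH h) * (lo * min_ratio * NL l)" by simp
  also have "\<dots> \<le> (lo * NH h) * NH l"
    using exit_NH_ge_min_ratio[OF l(1)] nonneg lo_pos by (intro mult_left_mono) auto
  also have "\<dots> < (hi * hi * second_ratio * NL h) * NH l"
    using exit_NH_less_second_ratio[OF h] NH_l by (intro mult_strict_right_mono)
  also have "\<dots> \<le> (hi * hi * (?g ^ (?q - 2) * min_ratio) * NL h) * NH l"
    using second_ratio_le nonneg NH_l by (intro mult_right_mono mult_left_mono) auto
  also have "\<dots> = lo * lo * min_ratio * (?g ^ ?q * (NL h * NH l))"
    using lo_pos unfolding pow power2_eq_square by (simp add: field_simps)
  finally have "NH h * NL l < ?g ^ ?q * (NL h * NH l)" using lo_pos min_ratio_pos by simp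
  also have "\<dots> \<le> ?g ^ card T * (NL h * NH l)"
    using card_ratios_le lo_pos lo_less_hi nonneg NH_l by (intro mult_right_mono power_increasing) auto
  finally show ?thesis .
qed

end

lemma exit_odds_less:
  assumes T: "2 \<le> card T" and h: "h \<in> X - T" "0 < NL h" and l: "l \<in> X - T" "0 < NL l"
  shows "NH h * NL l < (hi / lo) ^ card T * (NL h * NH l)"
proof (cases "\<exists>y\<in>T. 0 < NL y \<and> NH y / NL y \<noteq> NH i0 / NL i0")
  case False
  then have "ratios \<subseteq> {ratio i0}" unfolding ratios_def visited_def ratio_def by blast
  then have "ratios = {ratio i0}" using ratios_nonempty by (simp add: subset_singleton_iff)
  then have "NH h * NL l \<le> (hi / lo) ^ 1 * (NL h * NH l)" using exit_odds_le_card_ratios h l by simp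
  also have "\<dots> < (hi / lo) ^ card T * (NL h * NH l)"
    using T h l NH_pos_iff lo_pos lo_less_hi by (intro mult_strict_right_mono power_strict_increasing) auto
  finally show ?thesis .
next
  case True
  then obtain y where y: "y \<in> T" "0 < NL y" "NH y / NL y \<noteq> NH i0 / NL i0" by blast
  show ?thesis
  proof (cases "NH i0 / NL i0 < NH y / NL y")
    case True
    then show ?thesis using exit_odds_less_below_top h l y by blast
  next
    case False
    txt \<open>Now i0 is not at the bottom, i.e. not at the top for the swapped pair.\<close>
    have pos: "0 < NH i0" "0 < NL i0" "0 < NH y"
      using i0_visited y T_subset NH_pos_iff unfolding visited_def by auto
    have "NL i0 / NH i0 < NL y / NH y"
      using False y(3) pos y(2) by (simp add: field_simps)
    then have "NL l * NH h < (1 / lo / (1 / hi)) ^ card T * (NH l * NL h)"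
      using y pos h l NH_pos_iff
      by (intro occupation_pair.exit_odds_less_below_top[OF occupation_pair_swap]) auto
    then show ?thesis by (simp add: mult_ac)
  qed
qed

end

section \<open>The Markov chain of a parsimonious protocol\<close>

definition support_edges :: "nat \<Rightarrow> (nat \<Rightarrow> 's \<Rightarrow> nat \<Rightarrow> real) \<Rightarrow> (nat \<times> nat) set" where
  "support_edges m f = {(i, k). i < m \<and> k < m \<and> (\<exists>s. 0 < f i s k)}"

definition point_mass :: "nat \<Rightarrow> nat \<Rightarrow> real" where
  "point_mass i j = (if j = i then 1 else 0)"

lemma point_mass_nonneg: "0 \<le> point_mass i j"
  unfolding point_mass_def by simp

lemma sum_point_mass: "i < m \<Longrightarrow> (\<Sum>j<m. point_mass i j) = 1"
  unfolding point_mass_def by simp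

lemma sum_pos_iff_exists_pos:
  fixes F :: "'a \<Rightarrow> real"
  assumes "finite A" "\<And>a. a \<in> A \<Longrightarrow> 0 \<le> F a"
  shows "0 < (\<Sum>a\<in>A. F a) \<longleftrightarrow> (\<exists>a\<in>A. 0 < F a)"
  using assms sum_nonneg_eq_0_iff[OF assms] sum_nonneg[of A F] by (auto simp: order.strict_iff_order)

lemma chain_P_pos_iff:
  assumes "valid_signal_dist \<pi>" "\<And>s. 0 \<le> f i s k"
  shows "0 < chain_P \<pi> f i k \<longleftrightarrow> (\<exists>s. 0 < f i s k)"
proof -
  have \<pi>: "0 < \<pi> s" for s using assms(1) unfolding valid_signal_dist_def by auto
  have "0 \<le> \<pi> s * f i s k" for s using \<pi>[of s] assms(2)[of s] by simp
  moreover have "0 < \<pi> s * f i s k \<longleftrightarrow> 0 < f i s k" for s using \<pi>[of s] by (simp add: zero_less_mult_iff)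
  ultimately show ?thesis unfolding chain_P_def by (simp add: sum_pos_iff_exists_pos)
qed

lemma chain_edges_eq_support_edges:
  assumes "valid_signal_dist \<pi>" "\<And>i s k. i < m \<Longrightarrow> k < m \<Longrightarrow> 0 \<le> f i s k"
  shows "chain_edges m \<pi> f = support_edges m f"
  unfolding chain_edges_def support_edges_def using chain_P_pos_iff[OF assms(1)] assms(2) by auto

locale parsimonious_chain =
  fixes m :: nat and f :: "nat \<Rightarrow> 's::finite \<Rightarrow> nat \<Rightarrow> real" and h l :: nat
  assumes h_less: "h < m" and l_less: "l < m" and h_neq_l: "h \<noteq> l"
    and absorbing_h: "absorbing f h" and absorbing_l: "absorbing f l"
    and not_absorbing: "\<And>j. j < m \<Longrightarrow> j \<noteq> h \<Longrightarrow> j \<noteq> l \<Longrightarrow> \<not> absorbing f j"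
    and f_nonneg: "\<And>i s k. i < m \<Longrightarrow> k < m \<Longrightarrow> 0 \<le> f i s k"
    and f_stochastic: "\<And>i s. i < m \<Longrightarrow> (\<Sum>k<m. f i s k) = 1"
    and transient_support: "\<And>j. j < m \<Longrightarrow> j \<noteq> h \<Longrightarrow> j \<noteq> l \<Longrightarrow>
      \<exists>k. (j, k) \<in> (support_edges m f)\<^sup>* \<and> (k, j) \<notin> (support_edges m f)\<^sup>*"
begin

definition transients :: "nat set" where
  "transients = {j. j < m \<and> j \<noteq> h \<and> j \<noteq> l}"

lemma finite_transients: "finite transients"
  unfolding transients_def by auto

lemma transients_subset: "transients \<subseteq> {..<m}"
  unfolding transients_def by auto

lemma h_l_notin_transients: "h \<notin> transients" "l \<notin> transients"
  unfolding transients_def by auto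

lemma card_transients: "card transients = m - 2"
proof -
  have "transients = {..<m} - {h, l}" unfolding transients_def by auto
  then show ?thesis using h_less l_less h_neq_l by (simp add: card_Diff_subset)
qed

lemma sum_if_absorbing:
  "(\<Sum>j<m. if absorbing f j then 0 else F j) = (\<Sum>j\<in>transients. F j)"
proof -
  have "{..<m} \<inter> {j. \<not> absorbing f j} = transients"
    unfolding transients_def using not_absorbing absorbing_h absorbing_l by auto
  then show ?thesis by (simp add: sum.If_cases Compl_eq)
qed

lemma sum_split_transients: "(\<Sum>j<m. F j) = (\<Sum>j\<in>transients. F j) + F h + F l"
proof -
  have split: "{..<m} = transients \<union> {h, l}" unfolding transients_def using h_less l_less by auto
  have "(\<Sum>j<m. F j) = (\<Sum>j\<in>transients. F j) + (\<Sum>j\<in>{h, l}. F j)"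
    unfolding split using finite_transients h_l_notin_transients by (intro sum.union_disjoint) auto
  then show ?thesis using h_neq_l by (simp add: add.assoc)
qed

lemma reaches_absorbing:
  assumes "i < m"
  shows "\<exists>a\<in>{h, l}. (i, a) \<in> (support_edges m f)\<^sup>*"
  using assms
proof (induction i rule: measure_induct_rule[where f = "\<lambda>i. card {z. (i, z) \<in> (support_edges m f)\<^sup>*}"])
  case (less i)
  let ?E = "support_edges m f"
  show ?case
  proof (cases "i = h \<or> i = l")
    case False
    then obtain j where ij: "(i, j) \<in> ?E\<^sup>*" and ji: "(j, i) \<notin> ?E\<^sup>*"
      using transient_support less.prems by blast
    have "j < m" using ij ji by (cases rule: rtranclE) (auto simp: support_edges_def)
    have "{z. (i, z) \<in> ?E\<^sup>*} \<subseteq> insert i {..<m}"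
      by (auto elim: rtranclE simp: support_edges_def)
    then have "finite {z. (i, z) \<in> ?E\<^sup>*}" by (rule finite_subset) simp
    moreover have "{z. (j, z) \<in> ?E\<^sup>*} \<subset> {z. (i, z) \<in> ?E\<^sup>*}" using ij ji by auto
    ultimately have "card {z. (j, z) \<in> ?E\<^sup>*} < card {z. (i, z) \<in> ?E\<^sup>*}" by (rule psubset_card_mono)
    then obtain a where "a \<in> {h, l}" "(j, a) \<in> ?E\<^sup>*" using less.IH \<open>j < m\<close> by blast
    then show ?thesis using ij by (meson rtrancl_trans)
  qed auto
qed

end

text \<open>The expected number of visits to x from i when the sender never stops; for x = h this is
  the probability of absorption in h.\<close>
definition visits ::
  "nat \<Rightarrow> ('s::finite \<Rightarrow> real) \<Rightarrow> (nat \<Rightarrow> 's \<Rightarrow> nat \<Rightarrow> real) \<Rightarrow> nat \<Rightarrow> nat \<Rightarrow> real" where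
  "visits m \<pi> f i x = (\<Sum>t. cont m \<pi> f (point_mass i) (\<lambda>_. 0) t x)"

locale parsimonious_chain_signal = parsimonious_chain m f h l
  for m :: nat and f :: "nat \<Rightarrow> 's::finite \<Rightarrow> nat \<Rightarrow> real" and h l +
  fixes \<pi> :: "'s \<Rightarrow> real"
  assumes valid_\<pi>: "valid_signal_dist \<pi>"
begin

abbreviation P :: "nat \<Rightarrow> nat \<Rightarrow> real" where
  "P i k \<equiv> chain_P \<pi> f i k"

lemma P_nonneg: "i < m \<Longrightarrow> k < m \<Longrightarrow> 0 \<le> P i k"
  unfolding chain_P_def using valid_\<pi> f_nonneg
  by (intro sum_nonneg mult_nonneg_nonneg) (auto simp: valid_signal_dist_def less_imp_le)

lemma P_stochastic: "i < m \<Longrightarrow> (\<Sum>k<m. P i k) = 1"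
proof -
  assume "i < m"
  have "(\<Sum>k<m. P i k) = (\<Sum>s\<in>UNIV. \<pi> s * (\<Sum>k<m. f i s k))"
    unfolding chain_P_def sum_distrib_left by (rule sum.swap)
  also have "\<dots> = 1" using f_stochastic[OF \<open>i < m\<close>] valid_\<pi> by (simp add: valid_signal_dist_def)
  finally show ?thesis .
qed

lemma P_le_1: "i < m \<Longrightarrow> k < m \<Longrightarrow> P i k \<le> 1"
  using member_le_sum[of k "{..<m}" "P i"] P_nonneg P_stochastic by simp

lemma P_pos_iff: "i < m \<Longrightarrow> k < m \<Longrightarrow> 0 < P i k \<longleftrightarrow> (i, k) \<in> support_edges m f"
  using chain_P_pos_iff[OF valid_\<pi>] f_nonneg by (simp add: support_edges_def)

lemma cont_beyond: "m \<le> k \<Longrightarrow> cont m \<pi> f g sg t k = 0"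
  by (cases t) auto

lemma cont_Suc_P: "k < m \<Longrightarrow> cont m \<pi> f g sg (Suc t) k =
    (\<Sum>j<m. if absorbing f j then 0 else (1 - sg j) * cont m \<pi> f g sg t j * P j k)"
  unfolding chain_P_def by simp

context
  fixes g sg :: "nat \<Rightarrow> real"
  assumes g_nonneg: "\<And>j. j < m \<Longrightarrow> 0 \<le> g j"
    and sg_prob: "\<And>j. j < m \<Longrightarrow> 0 \<le> sg j \<and> sg j \<le> 1"
begin

lemma cont_nonneg: "0 \<le> cont m \<pi> f g sg t k"
proof (induction t arbitrary: k)
  case (Suc t)
  then show ?case using sg_prob P_nonneg
    by (cases "k < m")
      (auto simp: cont_Suc_P cont_beyond simp del: cont.simps(2) intro!: sum_nonneg mult_nonneg_nonneg)
qed (use g_nonneg in simp)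

lemma cont_le_cont_no_stop: "cont m \<pi> f g sg t k \<le> cont m \<pi> f g (\<lambda>_. 0) t k"
proof (induction t arbitrary: k)
  case (Suc t)
  show ?case
  proof (cases "k < m")
    case True
    have "(1 - sg j) * cont m \<pi> f g sg t j * P j k \<le> cont m \<pi> f g (\<lambda>_. 0) t j * P j k" if "j < m" for j
      using that True sg_prob[of j] cont_nonneg[of t j] Suc.IH[of j] P_nonneg[of j k]
      by (intro mult_right_mono) (auto intro: order.trans[OF mult_left_le_one_le])
    then show ?thesis using True by (auto simp: cont_Suc_P simp del: cont.simps(2) intro!: sum_mono)
  qed (simp add: cont_beyond)
qed simp

end

lemma sum_cont_Suc:
  "(\<Sum>k<m. cont m \<pi> f g sg (Suc t) k)
     = (\<Sum>j<m. if absorbing f j then 0 else (1 - sg j) * cont m \<pi> f g sg t j)"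
  (is "_ = (\<Sum>j<m. ?w j)")
proof -
  have "(\<Sum>k<m. cont m \<pi> f g sg (Suc t) k) = (\<Sum>k<m. \<Sum>j<m. ?w j * P j k)"
    by (intro sum.cong refl) (auto simp: cont_Suc_P simp del: cont.simps(2) intro!: sum.cong)
  also have "\<dots> = (\<Sum>j<m. ?w j * (\<Sum>k<m. P j k))"
    unfolding sum_distrib_left by (rule sum.swap)
  also have "\<dots> = (\<Sum>j<m. ?w j)" by (simp add: P_stochastic)
  finally show ?thesis .
qed

lemma sum_ends:
  "(\<Sum>j<m. ends m \<pi> f g sg t j)
     = (\<Sum>j<m. cont m \<pi> f g sg t j) - (\<Sum>k<m. cont m \<pi> f g sg (Suc t) k)"
proof -
  have "(\<Sum>j<m. cont m \<pi> f g sg t j) = (\<Sum>j<m. ends m \<pi> f g sg t j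
      + (if absorbing f j then 0 else (1 - sg j) * cont m \<pi> f g sg t j))"
    by (intro sum.cong refl) (simp add: ends_def algebra_simps)
  then show ?thesis unfolding sum_cont_Suc by (simp add: sum.distrib)
qed

lemma sum_ends_partial:
  "(\<Sum>t<n. \<Sum>j<m. ends m \<pi> f g sg t j)
     = (\<Sum>j<m. cont m \<pi> f g sg 0 j) - (\<Sum>j<m. cont m \<pi> f g sg n j)"
  by (induction n) (auto simp: sum_ends)

text \<open>Without stopping, mass_at g t k is the probability of being in the transient state k at
  time t, and for the absorbing states the probability of being absorbed there at time t.\<close>
abbreviation mass_at :: "(nat \<Rightarrow> real) \<Rightarrow> nat \<Rightarrow> nat \<Rightarrow> real" where
  "mass_at g t k \<equiv> cont m \<pi> f g (\<lambda>_. 0) t k"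

definition alive :: "(nat \<Rightarrow> real) \<Rightarrow> nat \<Rightarrow> real" where
  "alive g t = (\<Sum>j\<in>transients. mass_at g t j)"

lemma mass_at_nonneg: "(\<And>j. j < m \<Longrightarrow> 0 \<le> g j) \<Longrightarrow> 0 \<le> mass_at g t k"
  by (rule cont_nonneg) auto

lemma mass_at_Suc: "k < m \<Longrightarrow> mass_at g (Suc t) k = (\<Sum>j\<in>transients. mass_at g t j * P j k)"
  using sum_if_absorbing[of "\<lambda>j. mass_at g t j * P j k"]
  by (simp add: cont_Suc_P del: cont.simps(2) cong: if_cong)

lemma sum_mass_at_Suc: "(\<Sum>k<m. mass_at g (Suc t) k) = alive g t"
  using sum_cont_Suc[of g "\<lambda>_. 0" t] sum_if_absorbing[of "\<lambda>j. mass_at g t j"]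
  unfolding alive_def by (simp cong: if_cong)

lemma alive_le_total: "(\<And>j. j < m \<Longrightarrow> 0 \<le> g j) \<Longrightarrow> alive g t \<le> (\<Sum>k<m. mass_at g t k)"
  unfolding alive_def using transients_subset mass_at_nonneg by (intro sum_mono2) auto

lemma alive_nonneg: "(\<And>j. j < m \<Longrightarrow> 0 \<le> g j) \<Longrightarrow> 0 \<le> alive g t"
  unfolding alive_def using mass_at_nonneg by (intro sum_nonneg) auto

lemma total_mass_le: "(\<And>j. j < m \<Longrightarrow> 0 \<le> g j) \<Longrightarrow> (\<Sum>k<m. mass_at g t k) \<le> (\<Sum>k<m. g k)"
proof (induction t)
  case (Suc t)
  then show ?case using sum_mass_at_Suc[of g t] alive_le_total[of g t] by simp
qed simp

lemma alive_antimono: "(\<And>j. j < m \<Longrightarrow> 0 \<le> g j) \<Longrightarrow> t \<le> t' \<Longrightarrow> alive g t' \<le> alive g t"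
  using lift_Suc_antimono_le[of "alive g"] alive_le_total sum_mass_at_Suc by (metis (no_types, lifting))

lemma mass_at_add: "mass_at g (s + t) k = mass_at (\<lambda>j. mass_at g s j) t k"
proof (induction t arbitrary: k)
  case 0
  then show ?case by (simp add: cont_beyond)
qed (simp cong: if_cong)

lemma mass_at_linear: "mass_at g t k = (\<Sum>i<m. g i * mass_at (point_mass i) t k)"
proof (induction t arbitrary: k)
  case 0
  show ?case by (simp add: point_mass_def if_distrib[of "\<lambda>x. _ * x"] cong: if_cong)
next
  case (Suc t)
  show ?case
  proof (cases "k < m")
    case True
    have "mass_at g (Suc t) k = (\<Sum>j\<in>transients. \<Sum>i<m. g i * mass_at (point_mass i) t j * P j k)"
      using Suc.IH by (simp add: mass_at_Suc[OF True] sum_distrib_right del: cont.simps(2))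
    also have "\<dots> = (\<Sum>i<m. \<Sum>j\<in>transients. g i * mass_at (point_mass i) t j * P j k)"
      by (rule sum.swap)
    also have "\<dots> = (\<Sum>i<m. g i * mass_at (point_mass i) (Suc t) k)"
      by (simp add: mass_at_Suc[OF True] sum_distrib_left mult.assoc del: cont.simps(2))
    finally show ?thesis .
  qed (simp add: cont_beyond)
qed

lemma mass_at_from_absorbing: "a \<in> {h, l} \<Longrightarrow> mass_at (point_mass a) (Suc t) k = 0"
proof (induction t arbitrary: k)
  case 0
  then have "a \<notin> transients" using h_l_notin_transients by auto
  then show ?case using transients_subset
    by (cases "k < m") (auto simp: mass_at_Suc point_mass_def cont_beyond simp del: cont.simps(2) intro!: sum.neutral)
next
  case (Suc t)
  then show ?case by (cases "k < m") (simp_all add: mass_at_Suc cont_beyond del: cont.simps(2))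
qed

lemma alive_from_absorbing: "a \<in> {h, l} \<Longrightarrow> alive (point_mass a) t = 0"
proof (cases t)
  case 0
  assume "a \<in> {h, l}"
  then have "a \<notin> transients" using h_l_notin_transients by auto
  then show ?thesis using 0 transients_subset unfolding alive_def by (auto simp: point_mass_def intro!: sum.neutral)
next
  case (Suc t')
  assume "a \<in> {h, l}"
  then show ?thesis using Suc mass_at_from_absorbing unfolding alive_def by simp
qed

lemma alive_start: "i \<in> transients \<Longrightarrow> alive (point_mass i) 0 = 1"
  unfolding alive_def using transients_subset finite_transients by (auto simp: point_mass_def subset_eq)

lemma mass_at_first_step:
  assumes "i \<in> transients"
  shows "mass_at (point_mass i) (Suc t) k = (\<Sum>y<m. P i y * mass_at (point_mass y) t k)"
proof -
  have one: "mass_at (point_mass i) 1 y = P i y" if "y < m" for y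
  proof -
    have "mass_at (point_mass i) 1 y = (\<Sum>j\<in>transients. point_mass i j * P j y)"
      unfolding One_nat_def mass_at_Suc[OF that] using transients_subset by (intro sum.cong) auto
    also have "\<dots> = (\<Sum>j\<in>transients. if j = i then P i y else 0)"
      by (intro sum.cong) (auto simp: point_mass_def)
    also have "\<dots> = P i y" using assms finite_transients by simp
    finally show ?thesis .
  qed
  have "mass_at (point_mass i) (Suc t) k = mass_at (\<lambda>j. mass_at (point_mass i) 1 j) t k"
    using mass_at_add[of "point_mass i" 1 t k] by simp
  also have "\<dots> = (\<Sum>y<m. mass_at (point_mass i) 1 y * mass_at (point_mass y) t k)"
    by (rule mass_at_linear)
  also have "\<dots> = (\<Sum>y<m. P i y * mass_at (point_mass y) t k)" using one by simp
  finally show ?thesis .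
qed

lemma alive_first_step:
  "i \<in> transients \<Longrightarrow> alive (point_mass i) (Suc t) = (\<Sum>y<m. P i y * alive (point_mass y) t)"
  unfolding alive_def by (simp add: mass_at_first_step sum_distrib_left sum.swap[of _ transients] del: cont.simps(2))

lemma alive_point_mass_le_1: "y < m \<Longrightarrow> alive (point_mass y) t \<le> 1"
  using alive_le_total[of "point_mass y" t] total_mass_le[of "point_mass y" t] sum_point_mass[of y]
    point_mass_nonneg by simp

end

section \<open>Expected visits and absorption\<close>

context parsimonious_chain_signal
begin

lemma alive_eventually_less_1:
  assumes "i < m"
  shows "\<exists>k. alive (point_mass i) k < 1"
proof -
  obtain a where a: "a \<in> {h, l}" and path: "(i, a) \<in> (support_edges m f)\<^sup>*"
    using reaches_absorbing[OF assms] by blast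
  from path assms show ?thesis
  proof (induction rule: converse_rtrancl_induct)
    case base
    show ?case using alive_from_absorbing[OF a, of 0] by (intro exI[of _ 0]) simp
  next
    case (step y z)
    have yz: "y < m" "z < m" using step.hyps(1) by (auto simp: support_edges_def)
    obtain k where k: "alive (point_mass z) k < 1" using step.IH yz by auto
    show ?case
    proof (cases "y \<in> transients")
      case False
      then have "y \<in> {h, l}" using yz unfolding transients_def by auto
      then have "alive (point_mass y) 0 = 0" by (rule alive_from_absorbing)
      then show ?thesis by (intro exI[of _ 0]) simp
    next
      case True
      have "0 < P y z * (1 - alive (point_mass z) k)" using step.hyps(1) P_pos_iff yz k by simp
      also have "\<dots> \<le> (\<Sum>w<m. P y w * (1 - alive (point_mass w) k))"
        using P_nonneg alive_point_mass_le_1 yz by (intro member_le_sum mult_nonneg_nonneg) auto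
      also have "\<dots> = 1 - alive (point_mass y) (Suc k)"
        using P_stochastic[OF yz(1)] alive_first_step[OF True]
        by (simp add: algebra_simps sum_subtractf)
      finally show ?thesis by auto
    qed
  qed
qed

lemma alive_uniform_bound:
  obtains K b where "0 < K" "0 \<le> b" "b < 1" "\<And>i. i < m \<Longrightarrow> alive (point_mass i) K \<le> b"
proof -
  obtain k where k: "\<And>i. i < m \<Longrightarrow> alive (point_mass i) (k i) < 1"
    using alive_eventually_less_1 by metis
  define K where "K = Suc (Max (k ` {..<m}))"
  define b where "b = Max ((\<lambda>i. alive (point_mass i) K) ` {..<m})"
  have "b \<in> (\<lambda>i. alive (point_mass i) K) ` {..<m}"
    unfolding b_def using h_less by (intro Max_in) auto
  then obtain i where i: "i < m" "b = alive (point_mass i) K" by auto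
  have "k i \<le> K" unfolding K_def using i(1) by (simp add: le_SucI)
  then have "b < 1"
    using i k[OF i(1)] alive_antimono[of "point_mass i"] point_mass_nonneg by (meson le_less_trans)
  moreover have "0 \<le> b" using i alive_nonneg point_mass_nonneg by simp
  moreover have "alive (point_mass j) K \<le> b" if "j < m" for j unfolding b_def using that by auto
  ultimately show ?thesis using that[of K b] unfolding K_def by blast
qed

lemma alive_add_le:
  assumes g: "\<And>j. j < m \<Longrightarrow> 0 \<le> g j" and K: "\<And>i. i < m \<Longrightarrow> alive (point_mass i) K \<le> b"
  shows "alive g (s + K) \<le> b * alive g s"
proof -
  have "alive g (s + K) = (\<Sum>j\<in>transients. \<Sum>y<m. mass_at g s y * mass_at (point_mass y) K j)"
    unfolding alive_def mass_at_add by (intro sum.cong refl mass_at_linear)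
  also have "\<dots> = (\<Sum>y<m. mass_at g s y * alive (point_mass y) K)"
    unfolding alive_def sum_distrib_left by (rule sum.swap)
  also have "\<dots> = (\<Sum>y\<in>transients. mass_at g s y * alive (point_mass y) K)"
    using sum_split_transients[of "\<lambda>y. mass_at g s y * alive (point_mass y) K"]
      alive_from_absorbing[of h K] alive_from_absorbing[of l K] by simp
  also have "\<dots> \<le> (\<Sum>y\<in>transients. mass_at g s y * b)"
    using K transients_subset mass_at_nonneg[OF g] by (intro sum_mono mult_left_mono) auto
  also have "\<dots> = b * alive g s" unfolding alive_def by (simp add: sum_distrib_left mult.commute)
  finally show ?thesis .
qed

lemma summable_alive:
  assumes g: "\<And>j. j < m \<Longrightarrow> 0 \<le> g j" and g_sum: "(\<Sum>j<m. g j) = 1"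
  shows "summable (alive g)"
proof -
  obtain K b where K: "0 < K" and b: "0 \<le> b" "b < 1"
    and bound: "\<And>i. i < m \<Longrightarrow> alive (point_mass i) K \<le> b"
    using alive_uniform_bound by blast
  have geometric: "alive g (n * K) \<le> b ^ n" for n
  proof (induction n)
    case 0
    show ?case using alive_le_total[of g 0] total_mass_le[of g 0] g g_sum by simp
  next
    case (Suc n)
    have "alive g (n * K + K) \<le> b * alive g (n * K)" by (rule alive_add_le[OF g bound])
    also have "\<dots> \<le> b * b ^ n" using Suc.IH b by (intro mult_left_mono) auto
    finally show ?case by (simp add: add.commute)
  qed
  define b' where "b' = max b (1/2)"
  have b': "0 < b'" "b' < 1" "b \<le> b'" unfolding b'_def using b by auto
  define \<rho> where "\<rho> = root K b'"
  have \<rho>: "0 < \<rho>" "\<rho> < 1" "\<rho> ^ K = b'"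
    unfolding \<rho>_def using K b' by (auto simp: real_root_lt_1_iff real_root_pow_pos)
  have bound: "norm (alive g t) \<le> \<rho> ^ t / b'" for t
  proof -
    define n where "n = t div K"
    have "n * K \<le> t" "t \<le> n * K + K"
      unfolding n_def using div_mult_mod_eq[of t K] mod_less_divisor[OF K, of t] by linarith+
    have "alive g t \<le> b ^ n" using alive_antimono[of g "n * K" t, OF g \<open>n * K \<le> t\<close>] geometric[of n] by simp
    also have "\<dots> \<le> b' ^ n" using b b' by (intro power_mono) auto
    also have "\<dots> = \<rho> ^ (n * K + K) / b'" using \<rho>(3) b' by (simp add: power_add power_mult mult.commute)
    also have "\<dots> \<le> \<rho> ^ t / b'"
      using \<open>t \<le> n * K + K\<close> \<rho> b' by (intro divide_right_mono power_decreasing) auto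
    finally show ?thesis using alive_nonneg[of g t] g by simp
  qed
  have "summable (\<lambda>t. \<rho> ^ t / b')" using \<rho> by (intro summable_divide summable_geometric) simp
  then show ?thesis using bound by (rule summable_comparison_test')
qed

lemma summable_mass_at:
  assumes g: "\<And>j. j < m \<Longrightarrow> 0 \<le> g j" and g_sum: "(\<Sum>j<m. g j) = 1"
  shows "summable (\<lambda>t. mass_at g t x)"
proof (cases "x < m")
  case True
  have "norm (mass_at g (Suc t) x) \<le> alive g t" for t
  proof -
    have "mass_at g (Suc t) x = (\<Sum>j\<in>transients. mass_at g t j * P j x)" by (rule mass_at_Suc[OF True])
    also have "\<dots> \<le> (\<Sum>j\<in>transients. mass_at g t j * 1)"
      using mass_at_nonneg[of g] g P_le_1 True transients_subset by (intro sum_mono mult_left_mono) auto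
    finally show ?thesis using mass_at_nonneg[of g "Suc t" x] g unfolding alive_def by simp
  qed
  then have "summable (\<lambda>t. mass_at g (Suc t) x)"
    using summable_alive[of g, OF g g_sum] by (blast intro: summable_comparison_test')
  then show ?thesis by (rule iffD1[OF summable_Suc_iff])
qed (simp add: cont_beyond)

lemma summable_mass_at_point: "i < m \<Longrightarrow> summable (\<lambda>t. mass_at (point_mass i) t x)"
  using summable_mass_at[of "point_mass i"] point_mass_nonneg sum_point_mass by blast

lemma visits_nonneg: "i < m \<Longrightarrow> 0 \<le> visits m \<pi> f i x"
  unfolding visits_def using mass_at_nonneg[of "point_mass i"] point_mass_nonneg
  by (intro suminf_nonneg summable_mass_at_point) auto

lemma mass_at_le_visits:
  assumes "i < m"
  shows "mass_at (point_mass i) t x \<le> visits m \<pi> f i x"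
proof -
  have "(\<Sum>n\<in>{t}. mass_at (point_mass i) n x) \<le> (\<Sum>n. mass_at (point_mass i) n x)"
    using summable_mass_at_point[OF assms] mass_at_nonneg[of "point_mass i"] point_mass_nonneg
    by (intro sum_le_suminf) auto
  then show ?thesis unfolding visits_def by simp
qed

lemma visits_balance:
  assumes i0: "i0 \<in> transients" and x: "x < m"
  shows "visits m \<pi> f i0 x = (if x = i0 then 1 else 0) + (\<Sum>y\<in>transients. visits m \<pi> f i0 y * P y x)"
proof -
  have i0_less: "i0 < m" using i0 transients_subset by auto
  note summable = summable_mass_at_point[OF i0_less]
  have "visits m \<pi> f i0 x = mass_at (point_mass i0) 0 x + (\<Sum>t. mass_at (point_mass i0) (Suc t) x)"
    unfolding visits_def using suminf_split_head[OF summable] by simp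
  also have "mass_at (point_mass i0) 0 x = (if x = i0 then 1 else 0)" using x by (simp add: point_mass_def)
  also have "(\<Sum>t. mass_at (point_mass i0) (Suc t) x)
      = (\<Sum>t. \<Sum>y\<in>transients. mass_at (point_mass i0) t y * P y x)"
    using mass_at_Suc[OF x] by simp
  also have "\<dots> = (\<Sum>y\<in>transients. \<Sum>t. mass_at (point_mass i0) t y * P y x)"
    by (rule suminf_sum) (intro summable_mult2 summable)
  also have "\<dots> = (\<Sum>y\<in>transients. visits m \<pi> f i0 y * P y x)"
    unfolding visits_def by (intro sum.cong refl suminf_mult2[symmetric] summable)
  finally show ?thesis .
qed

lemma visits_absorbed:
  assumes i0: "i0 \<in> transients"
  shows "visits m \<pi> f i0 h + visits m \<pi> f i0 l = 1"
proof -
  have i0_less: "i0 < m" using i0 transients_subset by auto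
  let ?A = "\<lambda>t. mass_at (point_mass i0) t h + mass_at (point_mass i0) t l"
  have "?A (Suc t) = alive (point_mass i0) t - alive (point_mass i0) (Suc t)" for t
    using sum_mass_at_Suc[of "point_mass i0" t] sum_split_transients[of "mass_at (point_mass i0) (Suc t)"]
    unfolding alive_def by simp
  moreover have "(\<lambda>t. alive (point_mass i0) t - alive (point_mass i0) (Suc t)) sums (alive (point_mass i0) 0 - 0)"
    using summable_alive[of "point_mass i0"] point_mass_nonneg sum_point_mass[OF i0_less]
    by (intro telescope_sums' summable_LIMSEQ_zero) auto
  ultimately have "(\<lambda>t. ?A (Suc t)) sums 1" using alive_start[OF i0] by simp
  moreover have "?A 0 = 0" using i0 h_l_notin_transients h_less l_less by (auto simp: point_mass_def)
  ultimately have "?A sums 1" using sums_Suc_iff[of ?A 1] by simp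
  moreover have "?A sums (visits m \<pi> f i0 h + visits m \<pi> f i0 l)"
    unfolding visits_def by (intro sums_add summable_sums summable_mass_at_point i0_less)
  ultimately show ?thesis using sums_unique2 by blast
qed

lemma mass_at_zero_without_inflow:
  assumes S: "S \<subseteq> transients" "i0 \<notin> S" and i0: "i0 < m"
    and no_inflow: "\<And>y x. y \<in> transients - S \<Longrightarrow> x \<in> S \<Longrightarrow> visits m \<pi> f i0 y * P y x = 0"
    and x: "x \<in> S"
  shows "mass_at (point_mass i0) t x = 0"
  using x
proof (induction t arbitrary: x)
  case 0
  then show ?case using S transients_subset by (auto simp: point_mass_def)
next
  case (Suc t)
  have x_less: "x < m" using Suc.prems S transients_subset by auto
  have vanish: "mass_at (point_mass i0) t y * P y x = 0" if "y \<in> transients" for y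
  proof (cases "y \<in> S")
    case False
    then have "visits m \<pi> f i0 y = 0 \<or> P y x = 0" using no_inflow that Suc.prems by auto
    moreover have "0 \<le> mass_at (point_mass i0) t y" "mass_at (point_mass i0) t y \<le> visits m \<pi> f i0 y"
      using mass_at_nonneg[of "point_mass i0"] point_mass_nonneg mass_at_le_visits[OF i0] by auto
    ultimately show ?thesis by auto
  qed (simp add: Suc.IH)
  have "mass_at (point_mass i0) (Suc t) x = (\<Sum>y\<in>transients. mass_at (point_mass i0) t y * P y x)"
    by (rule mass_at_Suc[OF x_less])
  also have "\<dots> = 0" using vanish by (intro sum.neutral) blast
  finally show ?case .
qed

lemma inflow_visits_pos:
  assumes i0: "i0 \<in> transients" and S: "S \<subseteq> transients" "i0 \<notin> S"
    and z: "z \<in> S" "0 < visits m \<pi> f i0 z"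
  shows "0 < flow (visits m \<pi> f i0) P (transients - S) S"
proof (rule ccontr)
  assume not_pos: "\<not> ?thesis"
  have i0_less: "i0 < m" using i0 transients_subset by auto
  have finite_S: "finite S" using finite_transients S(1) by (rule rev_finite_subset)
  have nonneg: "0 \<le> visits m \<pi> f i0 y * P y x" if "y \<in> transients" "x \<in> S" for y x
  proof -
    have "y < m" "x < m" using that S transients_subset by auto
    then show ?thesis using visits_nonneg[OF i0_less] P_nonneg by simp
  qed
  have "visits m \<pi> f i0 y * P y x = 0" if y: "y \<in> transients - S" and x: "x \<in> S" for y x
  proof (rule ccontr)
    assume "visits m \<pi> f i0 y * P y x \<noteq> 0"
    then have "0 < visits m \<pi> f i0 y * P y x"
      using nonneg[of y x] y x by (auto simp: order.strict_iff_order)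
    then have inner: "0 < (\<Sum>x\<in>S. visits m \<pi> f i0 y * P y x)"
      using x y nonneg finite_S by (intro sum_pos2) auto
    have "0 < flow (visits m \<pi> f i0) P (transients - S) S"
      unfolding flow_def using nonneg finite_transients
      using y inner by (intro sum_pos2[of "transients - S" y]) (auto intro!: sum_nonneg)
    with not_pos show False ..
  qed
  then have "mass_at (point_mass i0) t z = 0" for t
    using mass_at_zero_without_inflow[OF S i0_less] z(1) by blast
  then have "visits m \<pi> f i0 z = 0" unfolding visits_def by simp
  with z(2) show False by simp
qed

lemma visits_from_absorbing:
  "visits m \<pi> f h h = 1" "visits m \<pi> f l h = 0"
proof -
  have "visits m \<pi> f a h = mass_at (point_mass a) 0 h" if "a \<in> {h, l}" for a
  proof -
    have "(\<Sum>t. mass_at (point_mass a) t h) = (\<Sum>t\<in>{0}. mass_at (point_mass a) t h)"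
    proof (rule suminf_finite)
      fix n :: nat assume "n \<notin> {0}"
      then obtain t where "n = Suc t" by (cases n) auto
      then show "mass_at (point_mass a) n h = 0" using mass_at_from_absorbing[OF that] by simp
    qed simp
    then show ?thesis unfolding visits_def by simp
  qed
  then show "visits m \<pi> f h h = 1" "visits m \<pi> f l h = 0"
    using h_less h_neq_l by (auto simp: point_mass_def)
qed

lemma visits_h_prob:
  assumes "i < m"
  shows "0 \<le> visits m \<pi> f i h \<and> visits m \<pi> f i h \<le> 1"
proof -
  consider "i = h" | "i = l" | "i \<in> transients" using assms unfolding transients_def by blast
  then show ?thesis
  proof cases
    case 3
    have "visits m \<pi> f i h + visits m \<pi> f i l = 1" by (rule visits_absorbed[OF 3])
    moreover have "0 \<le> visits m \<pi> f i h" "0 \<le> visits m \<pi> f i l" using visits_nonneg[OF assms] by auto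
    ultimately show ?thesis by linarith
  qed (simp_all add: visits_from_absorbing)
qed

end

lemma (in parsimonious_chain) signal_chain:
  "valid_signal_dist \<pi> \<Longrightarrow> parsimonious_chain_signal m f h l \<pi>"
  by (rule parsimonious_chain_signal.intro[OF parsimonious_chain_axioms])
    (simp add: parsimonious_chain_signal_axioms_def)

section \<open>The odds bound for absorption probabilities\<close>

lemma likelihood_ratio_bounds:
  fixes \<pi>H \<pi>L :: "'s::finite \<Rightarrow> real"
  assumes H: "valid_signal_dist \<pi>H" and L: "valid_signal_dist \<pi>L" and "\<pi>H \<noteq> \<pi>L"
  shows "\<And>s. lunder \<pi>H \<pi>L * \<pi>L s \<le> \<pi>H s" and "\<And>s. \<pi>H s \<le> lbar \<pi>H \<pi>L * \<pi>L s"
    and "0 < lunder \<pi>H \<pi>L" and "lunder \<pi>H \<pi>L < lbar \<pi>H \<pi>L"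
proof -
  have pos: "0 < \<pi>H s" "0 < \<pi>L s" for s using H L unfolding valid_signal_dist_def by auto
  let ?Q = "(\<lambda>s. \<pi>H s / \<pi>L s) ` UNIV"
  show lo: "lunder \<pi>H \<pi>L * \<pi>L s \<le> \<pi>H s" for s
  proof -
    have "lunder \<pi>H \<pi>L \<le> \<pi>H s / \<pi>L s" unfolding lunder_def by (rule Min_le) auto
    then show ?thesis using pos[of s] by (simp add: field_simps)
  qed
  show hi: "\<pi>H s \<le> lbar \<pi>H \<pi>L * \<pi>L s" for s
  proof -
    have "\<pi>H s / \<pi>L s \<le> lbar \<pi>H \<pi>L" unfolding lbar_def by (rule Max_ge) auto
    then show ?thesis using pos[of s] by (simp add: field_simps)
  qed
  have "lunder \<pi>H \<pi>L \<in> ?Q" unfolding lunder_def by (rule Min_in) auto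
  then show "0 < lunder \<pi>H \<pi>L" using pos by auto
  show "lunder \<pi>H \<pi>L < lbar \<pi>H \<pi>L"
  proof (rule ccontr)
    assume "\<not> ?thesis"
    then have proportional: "\<pi>H s = lunder \<pi>H \<pi>L * \<pi>L s" for s
      using lo[of s] hi[of s] pos[of s] by (smt (verit) mult_right_mono)
    then have "(\<Sum>s\<in>UNIV. \<pi>H s) = lunder \<pi>H \<pi>L * (\<Sum>s\<in>UNIV. \<pi>L s)" by (simp add: sum_distrib_left)
    then have "lunder \<pi>H \<pi>L = 1" using H L by (simp add: valid_signal_dist_def)
    then show False using proportional \<open>\<pi>H \<noteq> \<pi>L\<close> by auto
  qed
qed

lemma chain_P_likelihood_bounds:
  assumes "\<And>s. lo * \<pi>L s \<le> \<pi>H s" "\<And>s. \<pi>H s \<le> hi * \<pi>L s" "\<And>s. 0 \<le> f i s k"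
  shows "lo * chain_P \<pi>L f i k \<le> chain_P \<pi>H f i k" and "chain_P \<pi>H f i k \<le> hi * chain_P \<pi>L f i k"
  unfolding chain_P_def sum_distrib_left mult.assoc[symmetric]
  using assms by (auto intro!: sum_mono mult_right_mono)

context parsimonious_chain
begin

lemma mass_at_pos_iff:
  assumes \<pi>1: "valid_signal_dist \<pi>1" and \<pi>2: "valid_signal_dist \<pi>2" and g: "\<And>j. j < m \<Longrightarrow> 0 \<le> g j"
  shows "0 < cont m \<pi>1 f g (\<lambda>_. 0) t x \<longleftrightarrow> 0 < cont m \<pi>2 f g (\<lambda>_. 0) t x"
proof -
  interpret A: parsimonious_chain_signal m f h l \<pi>1 by (rule signal_chain[OF \<pi>1])
  interpret B: parsimonious_chain_signal m f h l \<pi>2 by (rule signal_chain[OF \<pi>2])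
  show ?thesis
  proof (induction t arbitrary: x)
    case (Suc t)
    show ?case
    proof (cases "x < m")
      case True
      have nonneg: "0 \<le> A.mass_at g t j * A.P j x" "0 \<le> B.mass_at g t j * B.P j x"
        if "j \<in> transients" for j
        using that True transients_subset A.mass_at_nonneg[of g] B.mass_at_nonneg[of g] g
          A.P_nonneg B.P_nonneg by (auto intro!: mult_nonneg_nonneg)
      have "0 < A.mass_at g t j * A.P j x \<longleftrightarrow> 0 < B.mass_at g t j * B.P j x" if "j \<in> transients" for j
      proof -
        have "j < m" using that transients_subset by auto
        then have "0 < A.P j x \<longleftrightarrow> 0 < B.P j x" using A.P_pos_iff B.P_pos_iff True by simp
        moreover have "0 \<le> A.mass_at g t j" "0 \<le> A.P j x" "0 \<le> B.mass_at g t j" "0 \<le> B.P j x"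
          using \<open>j < m\<close> True A.mass_at_nonneg[of g] B.mass_at_nonneg[of g] g A.P_nonneg B.P_nonneg
          by auto
        ultimately show ?thesis using Suc.IH[of j] by (auto simp: zero_less_mult_iff)
      qed
      then show ?thesis
        unfolding A.mass_at_Suc[OF True] B.mass_at_Suc[OF True]
        using nonneg finite_transients by (simp add: sum_pos_iff_exists_pos)
    qed (simp add: A.cont_beyond)
  qed simp
qed

lemma visits_pos_iff:
  assumes \<pi>1: "valid_signal_dist \<pi>1" and \<pi>2: "valid_signal_dist \<pi>2" and i: "i < m"
  shows "0 < visits m \<pi>1 f i x \<longleftrightarrow> 0 < visits m \<pi>2 f i x"
proof -
  interpret A: parsimonious_chain_signal m f h l \<pi>1 by (rule signal_chain[OF \<pi>1])
  interpret B: parsimonious_chain_signal m f h l \<pi>2 by (rule signal_chain[OF \<pi>2])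
  have "0 < visits m \<pi> f i x \<longleftrightarrow> (\<exists>t. 0 < cont m \<pi> f (point_mass i) (\<lambda>_. 0) t x)"
    if "valid_signal_dist \<pi>" for \<pi>
  proof -
    interpret C: parsimonious_chain_signal m f h l \<pi> by (rule signal_chain[OF that])
    show ?thesis unfolding visits_def using C.summable_mass_at_point[OF i]
      C.mass_at_nonneg[of "point_mass i"] point_mass_nonneg by (intro suminf_pos_iff) auto
  qed
  then show ?thesis using mass_at_pos_iff[OF \<pi>1 \<pi>2, of "point_mass i"] point_mass_nonneg \<pi>1 \<pi>2 by simp
qed

lemma occupation_pair_visits:
  assumes H: "valid_signal_dist \<pi>H" and L: "valid_signal_dist \<pi>L" and "\<pi>H \<noteq> \<pi>L"
    and i0: "i0 \<in> transients"
  shows "occupation_pair {..<m} transients i0 (visits m \<pi>H f i0) (visits m \<pi>L f i0)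
           (chain_P \<pi>H f) (chain_P \<pi>L f) (lunder \<pi>H \<pi>L) (lbar \<pi>H \<pi>L)"
proof -
  interpret H: parsimonious_chain_signal m f h l \<pi>H by (rule signal_chain[OF H])
  interpret L: parsimonious_chain_signal m f h l \<pi>L by (rule signal_chain[OF L])
  note bounds = likelihood_ratio_bounds[OF H L \<open>\<pi>H \<noteq> \<pi>L\<close>]
  have i0_less: "i0 < m" using i0 transients_subset by auto
  have P_bounds: "lunder \<pi>H \<pi>L * chain_P \<pi>L f y x \<le> chain_P \<pi>H f y x"
    "chain_P \<pi>H f y x \<le> lbar \<pi>H \<pi>L * chain_P \<pi>L f y x" if "y \<in> transients" "x < m" for y x
  proof -
    have "\<And>s. 0 \<le> f y s x" using that f_nonneg transients_subset by auto
    then show "lunder \<pi>H \<pi>L * chain_P \<pi>L f y x \<le> chain_P \<pi>H f y x"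
      "chain_P \<pi>H f y x \<le> lbar \<pi>H \<pi>L * chain_P \<pi>L f y x"
      using chain_P_likelihood_bounds[of "lunder \<pi>H \<pi>L" \<pi>L \<pi>H "lbar \<pi>H \<pi>L" f y x] bounds(1,2)
      by auto
  qed
  show ?thesis
  proof
    show "\<And>x. x \<in> {..<m} \<Longrightarrow> 0 \<le> visits m \<pi>H f i0 x"
      and "\<And>x. x \<in> {..<m} \<Longrightarrow> 0 \<le> visits m \<pi>L f i0 x"
      using H.visits_nonneg[OF i0_less] L.visits_nonneg[OF i0_less] by blast+
    show "\<And>x. x \<in> {..<m} \<Longrightarrow> visits m \<pi>H f i0 x
        = (if x = i0 then 1 else 0) + (\<Sum>y\<in>transients. visits m \<pi>H f i0 y * chain_P \<pi>H f y x)"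
      and "\<And>x. x \<in> {..<m} \<Longrightarrow> visits m \<pi>L f i0 x
        = (if x = i0 then 1 else 0) + (\<Sum>y\<in>transients. visits m \<pi>L f i0 y * chain_P \<pi>L f y x)"
      using H.visits_balance[OF i0] L.visits_balance[OF i0] by blast+
    show "\<And>x. x \<in> {..<m} \<Longrightarrow> 0 < visits m \<pi>H f i0 x \<longleftrightarrow> 0 < visits m \<pi>L f i0 x"
      using visits_pos_iff[OF H L i0_less] by blast
    show "\<And>S. S \<subseteq> transients \<Longrightarrow> i0 \<notin> S \<Longrightarrow> \<exists>z\<in>S. 0 < visits m \<pi>H f i0 z \<Longrightarrow>
        0 < flow (visits m \<pi>H f i0) (chain_P \<pi>H f) (transients - S) S"
      using H.inflow_visits_pos[OF i0] by blast
    show "\<And>S. S \<subseteq> transients \<Longrightarrow> i0 \<notin> S \<Longrightarrow> \<exists>z\<in>S. 0 < visits m \<pi>L f i0 z \<Longrightarrow>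
        0 < flow (visits m \<pi>L f i0) (chain_P \<pi>L f) (transients - S) S"
      using L.inflow_visits_pos[OF i0] by blast
  qed (use i0 transients_subset H.P_nonneg L.P_nonneg H.P_stochastic L.P_stochastic bounds P_bounds
         in auto)
qed

lemma absorption_odds_transient:
  assumes H: "valid_signal_dist \<pi>H" and L: "valid_signal_dist \<pi>L" and neq: "\<pi>H \<noteq> \<pi>L"
    and i: "i \<in> transients"
  defines "x \<equiv> visits m \<pi>H f i h" and "y \<equiv> visits m \<pi>L f i h"
  shows "x * (1 - y) \<le> gamma \<pi>H \<pi>L ^ (m - 2) * (y * (1 - x))"
    and "4 \<le> m \<Longrightarrow> 0 < y \<Longrightarrow> y < 1 \<Longrightarrow> x * (1 - y) < gamma \<pi>H \<pi>L ^ (m - 2) * (y * (1 - x))"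
proof -
  interpret H: parsimonious_chain_signal m f h l \<pi>H by (rule signal_chain[OF H])
  interpret L: parsimonious_chain_signal m f h l \<pi>L by (rule signal_chain[OF L])
  interpret O: occupation_pair "{..<m}" transients i "visits m \<pi>H f i" "visits m \<pi>L f i"
    "chain_P \<pi>H f" "chain_P \<pi>L f" "lunder \<pi>H \<pi>L" "lbar \<pi>H \<pi>L"
    by (rule occupation_pair_visits[OF H L neq i])
  have exits: "h \<in> {..<m} - transients" "l \<in> {..<m} - transients"
    using h_less l_less h_l_notin_transients by auto
  have l_visits: "visits m \<pi>H f i l = 1 - x" "visits m \<pi>L f i l = 1 - y"
    using H.visits_absorbed[OF i] L.visits_absorbed[OF i] unfolding x_def y_def by simp_all
  have gamma: "gamma \<pi>H \<pi>L ^ (m - 2) = (lbar \<pi>H \<pi>L / lunder \<pi>H \<pi>L) ^ card transients"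
    unfolding gamma_def card_transients ..
  show "x * (1 - y) \<le> gamma \<pi>H \<pi>L ^ (m - 2) * (y * (1 - x))"
    using O.exit_odds_le[OF exits] l_visits unfolding gamma x_def y_def by simp
  assume "4 \<le> m" "0 < y" "y < 1"
  then show "x * (1 - y) < gamma \<pi>H \<pi>L ^ (m - 2) * (y * (1 - x))"
    using O.exit_odds_less[OF _ exits(1) _ exits(2)] l_visits card_transients
    unfolding gamma x_def y_def by simp
qed

lemma visits_h_eq_1_transfer:
  assumes H: "valid_signal_dist \<pi>H" and L: "valid_signal_dist \<pi>L" and i: "i < m"
    and one: "visits m \<pi>L f i h = 1"
  shows "visits m \<pi>H f i h = 1"
proof -
  interpret H: parsimonious_chain_signal m f h l \<pi>H by (rule signal_chain[OF H])
  interpret L: parsimonious_chain_signal m f h l \<pi>L by (rule signal_chain[OF L])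
  consider "i = h" | "i = l" | "i \<in> transients" using i unfolding transients_def by blast
  then show ?thesis
  proof cases
    case 3
    then have "visits m \<pi>L f i l = 0" using L.visits_absorbed[OF 3] one by simp
    then have "visits m \<pi>H f i l = 0"
      using visits_pos_iff[OF H L i, of l] H.visits_nonneg[OF i, of l] by simp
    then show ?thesis using H.visits_absorbed[OF 3] by simp
  qed (use one H.visits_from_absorbing L.visits_from_absorbing in auto)
qed

lemma absorption_odds:
  assumes H: "valid_signal_dist \<pi>H" and L: "valid_signal_dist \<pi>L" and neq: "\<pi>H \<noteq> \<pi>L"
    and i: "i < m"
  defines "x \<equiv> visits m \<pi>H f i h" and "y \<equiv> visits m \<pi>L f i h"
  shows "0 \<le> x \<and> x \<le> 1 \<and> 0 \<le> y \<and> y \<le> 1"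
    and "x * (1 - y) \<le> gamma \<pi>H \<pi>L ^ (m - 2) * (y * (1 - x))"
    and "4 \<le> m \<Longrightarrow> x * (1 - y) < gamma \<pi>H \<pi>L ^ (m - 2) * (y * (1 - x))
           \<or> (x = 0 \<and> y = 0) \<or> (x = 1 \<and> y = 1)"
proof -
  interpret H: parsimonious_chain_signal m f h l \<pi>H by (rule signal_chain[OF H])
  interpret L: parsimonious_chain_signal m f h l \<pi>L by (rule signal_chain[OF L])
  show "0 \<le> x \<and> x \<le> 1 \<and> 0 \<le> y \<and> y \<le> 1"
    using H.visits_h_prob[OF i] L.visits_h_prob[OF i] unfolding x_def y_def by simp
  have cases: "i = h \<or> i = l \<or> i \<in> transients" using i unfolding transients_def by blast
  then show "x * (1 - y) \<le> gamma \<pi>H \<pi>L ^ (m - 2) * (y * (1 - x))"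
  proof (elim disjE)
    assume "i \<in> transients"
    then show ?thesis using absorption_odds_transient(1)[OF H L neq] unfolding x_def y_def by blast
  qed (use H.visits_from_absorbing L.visits_from_absorbing in \<open>simp_all add: x_def y_def\<close>)
  assume "4 \<le> m"
  consider "y = 0" | "y = 1" | "0 < y" "y < 1"
    using L.visits_h_prob[OF i] unfolding y_def by fastforce
  then show "x * (1 - y) < gamma \<pi>H \<pi>L ^ (m - 2) * (y * (1 - x)) \<or> (x = 0 \<and> y = 0) \<or> (x = 1 \<and> y = 1)"
  proof cases
    case 1
    then show ?thesis
      using visits_pos_iff[OF H L i, of h] H.visits_nonneg[OF i, of h] unfolding x_def y_def by simp
  next
    case 2
    then show ?thesis using visits_h_eq_1_transfer[OF H L i] unfolding x_def y_def by simp
  next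
    case 3
    then have "i \<in> transients"
      using cases L.visits_from_absorbing unfolding y_def by auto
    then show ?thesis using absorption_odds_transient(2)[OF H L neq _ \<open>4 \<le> m\<close>] 3
      unfolding x_def y_def by simp
  qed
qed

end

section \<open>Payoffs\<close>

context parsimonious_chain_signal
begin

context
  fixes g sg :: "nat \<Rightarrow> real"
  assumes g_nonneg: "\<And>j. j < m \<Longrightarrow> 0 \<le> g j" and g_sum: "(\<Sum>j<m. g j) = 1"
    and sg_prob: "\<And>j. j < m \<Longrightarrow> 0 \<le> sg j \<and> sg j \<le> 1"
begin

lemma ends_nonneg: "0 \<le> ends m \<pi> f g sg t j"
  using cont_nonneg[of g sg t j, OF g_nonneg sg_prob] sg_prob[of j]
  by (cases "j < m") (auto simp: ends_def cont_beyond)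

lemma sum_ends_partial_le_1: "(\<Sum>t<n. \<Sum>j<m. ends m \<pi> f g sg t j) \<le> 1"
  using sum_ends_partial[where g = g and sg = sg and n = n] cont_nonneg[of g sg, OF g_nonneg sg_prob] g_sum
  by (simp add: sum_nonneg)

lemma summable_ends: "summable (\<lambda>t. \<Sum>j<m. ends m \<pi> f g sg t j)"
  using ends_nonneg sum_ends_partial_le_1 by (intro summableI_nonneg_bounded sum_nonneg) auto

lemma suminf_ends_le_1: "(\<Sum>t. \<Sum>j<m. ends m \<pi> f g sg t j) \<le> 1"
  using summable_ends sum_ends_partial_le_1 by (rule suminf_le_const)

lemma summable_cont_h: "summable (\<lambda>t. cont m \<pi> f g sg t h)"
proof (rule summable_comparison_test'[OF summable_ends])
  fix t :: nat
  have "cont m \<pi> f g sg t h = ends m \<pi> f g sg t h" using absorbing_h by (simp add: ends_def)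
  also have "\<dots> \<le> (\<Sum>j<m. ends m \<pi> f g sg t j)" using h_less ends_nonneg by (intro member_le_sum) auto
  finally show "norm (cont m \<pi> f g sg t h) \<le> (\<Sum>j<m. ends m \<pi> f g sg t j)"
    using cont_nonneg[of g sg, OF g_nonneg sg_prob] by simp
qed

lemma prob_actL_le:
  assumes a: "\<And>j. j < m \<Longrightarrow> 0 \<le> a j \<and> a j \<le> 1"
  shows "prob_actL m \<pi> f g a sg \<le> 1 - prob_actH m \<pi> f g a sg"
proof -
  let ?E = "\<lambda>t. \<Sum>j<m. ends m \<pi> f g sg t j"
  let ?H = "\<lambda>t. \<Sum>j<m. ends m \<pi> f g sg t j * a j" and ?L = "\<lambda>t. \<Sum>j<m. ends m \<pi> f g sg t j * (1 - a j)"
  have split: "?H t + ?L t = ?E t" for t by (simp add: sum.distrib[symmetric] algebra_simps)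
  have nonneg: "0 \<le> ?H t" "0 \<le> ?L t" for t
    using ends_nonneg a by (auto intro!: sum_nonneg mult_nonneg_nonneg)
  have "norm (?H t) \<le> ?E t" "norm (?L t) \<le> ?E t" for t using nonneg[of t] split[of t] by auto
  then have "summable ?H" "summable ?L" by (blast intro: summable_comparison_test'[OF summable_ends])+
  then have "prob_actH m \<pi> f g a sg + prob_actL m \<pi> f g a sg = (\<Sum>t. ?E t)"
    unfolding prob_actH_def prob_actL_def using split by (simp add: suminf_add)
  then show ?thesis using suminf_ends_le_1 by simp
qed

end

lemma prob_actH_eq:
  assumes "a h = 1" and "\<And>j. j < m \<Longrightarrow> j \<noteq> h \<Longrightarrow> a j = 0"
  shows "prob_actH m \<pi> f g a sg = (\<Sum>t. cont m \<pi> f g sg t h)"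
proof -
  have "(\<Sum>j<m. ends m \<pi> f g sg t j * a j) = cont m \<pi> f g sg t h" for t
  proof -
    have "(\<Sum>j<m. ends m \<pi> f g sg t j * a j) = (\<Sum>j<m. if j = h then ends m \<pi> f g sg t h else 0)"
      using assms by (intro sum.cong) auto
    then show ?thesis using h_less absorbing_h by (simp add: ends_def)
  qed
  then show ?thesis unfolding prob_actH_def by simp
qed

lemma suminf_mass_at_h:
  assumes "\<And>j. j < m \<Longrightarrow> 0 \<le> g j" and "(\<Sum>j<m. g j) = 1"
  shows "(\<Sum>t. mass_at g t h) = (\<Sum>i<m. g i * visits m \<pi> f i h)"
proof -
  have "(\<Sum>t. mass_at g t h) = (\<Sum>t. \<Sum>i<m. g i * mass_at (point_mass i) t h)"
    by (rule suminf_cong) (rule mass_at_linear)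
  also have "\<dots> = (\<Sum>i<m. \<Sum>t. g i * mass_at (point_mass i) t h)"
    by (rule suminf_sum) (auto intro!: summable_mult summable_mass_at_point)
  also have "\<dots> = (\<Sum>i<m. g i * visits m \<pi> f i h)"
    unfolding visits_def by (intro sum.cong refl) (auto intro!: suminf_mult summable_mass_at_point)
  finally show ?thesis .
qed

lemma prob_actH_le_visits:
  assumes g: "\<And>j. j < m \<Longrightarrow> 0 \<le> g j" "(\<Sum>j<m. g j) = 1"
    and sg: "\<And>j. j < m \<Longrightarrow> 0 \<le> sg j \<and> sg j \<le> 1"
    and a: "a h = 1" "\<And>j. j < m \<Longrightarrow> j \<noteq> h \<Longrightarrow> a j = 0"
  shows "prob_actH m \<pi> f g a sg \<le> (\<Sum>i<m. g i * visits m \<pi> f i h)"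
proof -
  have "(\<Sum>t. cont m \<pi> f g sg t h) \<le> (\<Sum>t. mass_at g t h)"
    using summable_cont_h[OF g sg] summable_cont_h[of g "\<lambda>_. 0"] g
    by (intro suminf_le cont_le_cont_no_stop[of g sg] g sg) auto
  then show ?thesis using prob_actH_eq[of a, OF a] suminf_mass_at_h[of g, OF g] by simp
qed

lemma prob_actH_no_stop:
  assumes "a h = 1" "\<And>j. j < m \<Longrightarrow> j \<noteq> h \<Longrightarrow> a j = 0"
    and "\<And>j. j < m \<Longrightarrow> 0 \<le> g j" "(\<Sum>j<m. g j) = 1"
  shows "prob_actH m \<pi> f g a (\<lambda>_. 0) = (\<Sum>i<m. g i * visits m \<pi> f i h)"
  using prob_actH_eq[of a, OF assms(1,2)] suminf_mass_at_h[of g, OF assms(3,4)] by simp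

end

lemma (in parsimonious_chain) receiver_payoff_le_average:
  assumes H: "valid_signal_dist \<pi>H" and L: "valid_signal_dist \<pi>L"
    and g: "\<And>j. j < m \<Longrightarrow> 0 \<le> g j" "(\<Sum>j<m. g j) = 1"
    and a: "a h = 1" "\<And>j. j < m \<Longrightarrow> j \<noteq> h \<Longrightarrow> a j = 0"
    and \<sigma>: "sender_best_response m \<pi>H \<pi>L f g a \<sigma>" and p: "0 \<le> p" "p \<le> 1"
  shows "receiver_payoff p m \<pi>H \<pi>L f g a \<sigma>
           \<le> (\<Sum>i<m. g i * (p * visits m \<pi>H f i h + (1 - p) * (1 - visits m \<pi>L f i h)))"
proof -
  interpret H: parsimonious_chain_signal m f h l \<pi>H by (rule signal_chain[OF H])
  interpret L: parsimonious_chain_signal m f h l \<pi>L by (rule signal_chain[OF L])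
  let ?X = "\<Sum>i<m. g i * visits m \<pi>H f i h" and ?Y = "\<Sum>i<m. g i * visits m \<pi>L f i h"
  have a_prob: "0 \<le> a j \<and> a j \<le> 1" if "j < m" for j using a that by (cases "j = h") auto
  have \<sigma>_prob: "\<And>j. j < m \<Longrightarrow> 0 \<le> \<sigma> j \<theta> \<and> \<sigma> j \<theta> \<le> 1" for \<theta>
    using \<sigma> unfolding sender_best_response_def valid_strategy_def by auto
  have H_bound: "prob_actH m \<pi>H f g a (\<lambda>j. \<sigma> j True) \<le> ?X"
    using H.prob_actH_le_visits[of g "\<lambda>j. \<sigma> j True" a, OF g \<sigma>_prob a] .
  have "?Y = prob_actH m \<pi>L f g a (\<lambda>_. 0)" using L.prob_actH_no_stop[of a g, OF a g] by simp
  also have "\<dots> = sender_payoff m \<pi>H \<pi>L f g a (\<lambda>_ _. 0) False" unfolding sender_payoff_def by simp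
  also have "\<dots> \<le> sender_payoff m \<pi>H \<pi>L f g a \<sigma> False"
    using \<sigma> unfolding sender_best_response_def valid_strategy_def by simp
  also have "\<dots> = prob_actH m \<pi>L f g a (\<lambda>j. \<sigma> j False)" unfolding sender_payoff_def by simp
  finally have L_bound: "prob_actL m \<pi>L f g a (\<lambda>j. \<sigma> j False) \<le> 1 - ?Y"
    using L.prob_actL_le[of g "\<lambda>j. \<sigma> j False" a, OF g \<sigma>_prob a_prob] by simp
  have "receiver_payoff p m \<pi>H \<pi>L f g a \<sigma> \<le> p * ?X + (1 - p) * (1 - ?Y)"
    unfolding receiver_payoff_def using H_bound L_bound p by (intro add_mono mult_left_mono) auto
  also have "\<dots> = (\<Sum>i<m. g i * (p * visits m \<pi>H f i h + (1 - p) * (1 - visits m \<pi>L f i h)))"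
  proof -
    have "(\<Sum>i<m. g i * (p * visits m \<pi>H f i h + (1 - p) * (1 - visits m \<pi>L f i h)))
        = p * ?X + (1 - p) * (\<Sum>i<m. g i) - (1 - p) * ?Y"
      by (simp add: algebra_simps sum.distrib sum_subtractf sum_distrib_left)
    then show ?thesis using g(2) by (simp add: algebra_simps)
  qed
  finally show ?thesis .
qed

section \<open>Maximising the receiver's value under the odds bound\<close>

lemma kappa_ge_1: "0 < p \<Longrightarrow> p < 1 \<Longrightarrow> 1 \<le> kappa p"
  unfolding kappa_def by (cases "p \<le> 1/2") (auto simp: field_simps)

lemma odds_value_le_prior:
  fixes p G x y :: real
  assumes p: "1/2 \<le> p" "p < 1" and G: "1 \<le> G" "(1 - p) * G \<le> p"
    and x: "0 \<le> x" "x \<le> 1" and y: "0 \<le> y" "y \<le> 1"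
    and odds: "x * (1 - y) \<le> G * (y * (1 - x))"
  shows "p * x + (1 - p) * (1 - y) \<le> p"
proof -
  define A where "A = 1 + (G - 1) * (1 - x)"
  have A: "1 \<le> A" unfolding A_def using G x by simp
  have "(1 - p) * (1 - y) * A = (1 - p) * (A - y * A)" by (simp add: algebra_simps)
  also have "\<dots> \<le> (1 - p) * (A - x)"
    using odds p unfolding A_def by (intro mult_left_mono) (auto simp: algebra_simps)
  also have "\<dots> = ((1 - p) * G) * (1 - x)" unfolding A_def by (simp add: algebra_simps)
  also have "\<dots> \<le> p * (1 - x)" using G x by (intro mult_right_mono) auto
  also have "\<dots> \<le> p * (1 - x) * A" using mult_left_mono[OF A, of "p * (1 - x)"] p x by simp
  finally have "(1 - p) * (1 - y) \<le> p * (1 - x)" using A by simp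
  then show ?thesis by (simp add: algebra_simps)
qed

lemma weighted_am_gm:
  fixes p A B z :: real
  assumes p: "0 < p" "p < 1" and z: "0 \<le> z" "z \<le> A * B" and S: "0 \<le> p * A + (1 - p) * B"
  shows "2 * sqrt (p * (1 - p) * z) \<le> p * A + (1 - p) * B"
    and "z < A * B \<or> p * A \<noteq> (1 - p) * B \<Longrightarrow> 2 * sqrt (p * (1 - p) * z) < p * A + (1 - p) * B"
proof -
  have pq: "0 < p * (1 - p)" using p by simp
  have square: "(p * A + (1 - p) * B)\<^sup>2 = (p * A - (1 - p) * B)\<^sup>2 + 4 * (p * (1 - p)) * (A * B)"
    by (simp add: power2_eq_square algebra_simps)
  have two: "2 * sqrt (p * (1 - p) * z) = sqrt (4 * (p * (1 - p)) * z)" by (simp add: real_sqrt_mult)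
  have le: "4 * (p * (1 - p)) * z \<le> 4 * (p * (1 - p)) * (A * B)"
    using z pq by (intro mult_left_mono) auto
  then have "4 * (p * (1 - p)) * z \<le> (p * A + (1 - p) * B)\<^sup>2" unfolding square
    by (smt (verit) zero_le_power2)
  then show "2 * sqrt (p * (1 - p) * z) \<le> p * A + (1 - p) * B"
    unfolding two using S by (simp add: real_le_lsqrt)
  assume strict: "z < A * B \<or> p * A \<noteq> (1 - p) * B"
  have "4 * (p * (1 - p)) * z < (p * A + (1 - p) * B)\<^sup>2"
  proof (cases "z < A * B")
    case True
    then have "4 * (p * (1 - p)) * z < 4 * (p * (1 - p)) * (A * B)"
      using pq by (intro mult_strict_left_mono) auto
    then show ?thesis unfolding square by (smt (verit) zero_le_power2)
  next
    case False
    then have "0 < (p * A - (1 - p) * B)\<^sup>2" using strict by simp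
    then show ?thesis using le unfolding square by linarith
  qed
  then show "2 * sqrt (p * (1 - p) * z) < p * A + (1 - p) * B"
    unfolding two using S pq z by (simp add: real_less_lsqrt)
qed

lemma odds_value_bound:
  fixes p G x y :: real
  assumes p: "0 < p" "p < 1" and G: "kappa p < G"
    and x: "0 \<le> x" "x \<le> 1" and y: "0 \<le> y" "y \<le> 1"
    and odds: "x * (1 - y) \<le> G * (y * (1 - x))"
  shows "p * x + (1 - p) * (1 - y) \<le> 1 - (2 * sqrt (p * (1 - p) * G) - 1) / (G - 1)"
    and "x * (1 - y) < G * (y * (1 - x)) \<or> (x = 0 \<and> y = 0) \<or> (x = 1 \<and> y = 1) \<Longrightarrow>
         p * x + (1 - p) * (1 - y) < 1 - (2 * sqrt (p * (1 - p) * G) - 1) / (G - 1)"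
proof -
  have G1: "1 < G" using kappa_ge_1[OF p] G by simp
  define A B where "A = 1 + (G - 1) * (1 - x)" and "B = 1 + (G - 1) * y"
  let ?S = "p * A + (1 - p) * B" and ?c = "2 * sqrt (p * (1 - p) * G)"
  have S: "?S = 1 + (G - 1) * (1 - (p * x + (1 - p) * (1 - y)))"
    unfolding A_def B_def by (simp add: algebra_simps)
  have product: "A * B - G = (G - 1) * (G * (y * (1 - x)) - x * (1 - y))"
    unfolding A_def B_def by (simp add: algebra_simps)
  have "G \<le> A * B" using product odds G1 by (smt (verit) mult_nonneg_nonneg)
  moreover have "0 \<le> G" using G1 by simp
  moreover have S_nonneg: "0 \<le> ?S"
    using x y G1 p unfolding A_def B_def by (intro add_nonneg_nonneg mult_nonneg_nonneg) auto
  ultimately have am_gm: "?c \<le> ?S" "G < A * B \<or> p * A \<noteq> (1 - p) * B \<Longrightarrow> ?c < ?S"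
    using weighted_am_gm[OF p] by blast+
  have value_le: "p * x + (1 - p) * (1 - y) \<le> 1 - (?c - 1) / (G - 1)" if "?c \<le> ?S"
    using that G1 unfolding S by (simp add: field_simps)
  have value_less: "p * x + (1 - p) * (1 - y) < 1 - (?c - 1) / (G - 1)" if "?c < ?S"
    using that G1 unfolding S by (simp add: field_simps)
  show "p * x + (1 - p) * (1 - y) \<le> 1 - (?c - 1) / (G - 1)" using am_gm(1) by (rule value_le)
  assume "x * (1 - y) < G * (y * (1 - x)) \<or> (x = 0 \<and> y = 0) \<or> (x = 1 \<and> y = 1)"
  moreover have "G < A * B" if "x * (1 - y) < G * (y * (1 - x))"
    using that product G1 by (smt (verit) mult_pos_pos)
  moreover have "p * A \<noteq> (1 - p) * B" if "x = 0 \<and> y = 0"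
    using that G p unfolding kappa_def A_def B_def by (simp add: field_simps)
  moreover have "p * A \<noteq> (1 - p) * B" if "x = 1 \<and> y = 1"
    using that G p unfolding kappa_def A_def B_def by (simp add: field_simps)
  ultimately have "?c < ?S" using am_gm(2) by blast
  then show "p * x + (1 - p) * (1 - y) < 1 - (?c - 1) / (G - 1)" by (rule value_less)
qed

lemma odds_value_le_max_prior:
  fixes p G x y :: real
  assumes p: "0 < p" "p < 1" and G: "1 \<le> G" "G \<le> kappa p"
    and x: "0 \<le> x" "x \<le> 1" and y: "0 \<le> y" "y \<le> 1"
    and odds: "x * (1 - y) \<le> G * (y * (1 - x))"
  shows "p * x + (1 - p) * (1 - y) \<le> max p (1 - p)"
proof (cases "1/2 \<le> p")
  case True
  then have "kappa p = p / (1 - p)" using p unfolding kappa_def by (simp add: field_simps)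
  then have "(1 - p) * G \<le> (1 - p) * (p / (1 - p))" using G p by (intro mult_left_mono) auto
  then have "(1 - p) * G \<le> p" using p by simp
  then show ?thesis using odds_value_le_prior[OF True p(2) G(1) _ x y odds] by simp
next
  case False
  then have "kappa p = (1 - p) / p" using p unfolding kappa_def by (simp add: field_simps)
  then have "p * G \<le> p * ((1 - p) / p)" using G p by (intro mult_left_mono) auto
  then have "(1 - (1 - p)) * G \<le> 1 - p" using p by simp
  moreover have "(1 - y) * (1 - (1 - x)) \<le> G * ((1 - x) * (1 - (1 - y)))"
    using odds by (simp add: algebra_simps)
  ultimately have "(1 - p) * (1 - y) + (1 - (1 - p)) * (1 - (1 - x)) \<le> 1 - p"
    using False p x y G by (intro odds_value_le_prior) auto
  then show ?thesis by (simp add: algebra_simps)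
qed

lemma odds_value_le_URR:
  fixes p \<gamma> x y :: real and m :: nat
  assumes p: "0 < p" "p < 1" and \<gamma>: "1 \<le> \<gamma> ^ (m - 2)"
    and x: "0 \<le> x" "x \<le> 1" and y: "0 \<le> y" "y \<le> 1"
    and odds: "x * (1 - y) \<le> \<gamma> ^ (m - 2) * (y * (1 - x))"
  shows "p * x + (1 - p) * (1 - y) \<le> URR p \<gamma> m"
    and "kappa p < \<gamma> ^ (m - 2) \<Longrightarrow>
         x * (1 - y) < \<gamma> ^ (m - 2) * (y * (1 - x)) \<or> (x = 0 \<and> y = 0) \<or> (x = 1 \<and> y = 1) \<Longrightarrow>
         p * x + (1 - p) * (1 - y) < URR p \<gamma> m"
  using odds_value_bound[OF p _ x y odds] odds_value_le_max_prior[OF p \<gamma> _ x y odds]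
  unfolding URR_def by (simp_all add: not_less)

lemma weighted_average_le:
  fixes w v :: "'a \<Rightarrow> real"
  assumes "finite A" "\<And>i. i \<in> A \<Longrightarrow> 0 \<le> w i" "(\<Sum>i\<in>A. w i) = 1" "\<And>i. i \<in> A \<Longrightarrow> v i \<le> c"
  shows "(\<Sum>i\<in>A. w i * v i) \<le> c"
proof -
  have "(\<Sum>i\<in>A. w i * v i) \<le> (\<Sum>i\<in>A. w i * c)" using assms by (intro sum_mono mult_left_mono) auto
  then show ?thesis using assms(3) by (simp add: sum_distrib_right[symmetric])
qed

lemma weighted_average_less:
  fixes w v :: "'a \<Rightarrow> real"
  assumes "finite A" "\<And>i. i \<in> A \<Longrightarrow> 0 \<le> w i" "(\<Sum>i\<in>A. w i) = 1" "\<And>i. i \<in> A \<Longrightarrow> v i < c"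
  shows "(\<Sum>i\<in>A. w i * v i) < c"
proof -
  obtain i where i: "i \<in> A" "0 < w i"
    using assms(2,3) sum_nonpos[of A w] by (metis not_le zero_less_one)
  have "(\<Sum>i\<in>A. w i * v i) < (\<Sum>i\<in>A. w i * c)"
    using assms i by (intro sum_strict_mono_ex1) (auto intro: mult_left_mono mult_strict_left_mono less_imp_le)
  then show ?thesis using assms(3) by (simp add: sum_distrib_right[symmetric])
qed

lemma parsimonious_chain_of_parsimonious:
  assumes \<pi>: "valid_signal_dist \<pi>" and protocol: "valid_protocol m f g a"
    and pars: "parsimonious m \<pi> f a"
  obtains h l where "parsimonious_chain m f h l" "a h = 1" "\<And>j. j < m \<Longrightarrow> j \<noteq> h \<Longrightarrow> a j = 0"
proof -
  obtain h l where hl: "h < m" "l < m" "h \<noteq> l" "absorbing f h" "absorbing f l" "a h = 1" "a l = 0"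
    and rest: "\<And>j. j < m \<Longrightarrow> j \<noteq> h \<Longrightarrow> j \<noteq> l \<Longrightarrow> \<not> absorbing f j \<and> transient m \<pi> f j \<and> a j = 0"
    using pars unfolding parsimonious_def by blast
  have f: "\<And>i s k. i < m \<Longrightarrow> k < m \<Longrightarrow> 0 \<le> f i s k" "\<And>i s. i < m \<Longrightarrow> (\<Sum>k<m. f i s k) = 1"
    using protocol unfolding valid_protocol_def by auto
  have edges: "chain_edges m \<pi> f = support_edges m f"
    using chain_edges_eq_support_edges[of \<pi> m f] \<pi> f(1) by blast
  have "parsimonious_chain m f h l"
  proof
    show "\<And>j. j < m \<Longrightarrow> j \<noteq> h \<Longrightarrow> j \<noteq> l \<Longrightarrow>
        \<exists>k. (j, k) \<in> (support_edges m f)\<^sup>* \<and> (k, j) \<notin> (support_edges m f)\<^sup>*"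
      using rest unfolding transient_def edges by blast
  qed (use hl rest f in auto)
  moreover have "a j = 0" if "j < m" "j \<noteq> h" for j using that rest hl by (cases "j = l") auto
  ultimately show ?thesis using that hl by blast
qed

lemma (in parsimonious_chain) state_value_le_URR:
  assumes p: "0 < p" "p < 1" and H: "valid_signal_dist \<pi>H" and L: "valid_signal_dist \<pi>L"
    and neq: "\<pi>H \<noteq> \<pi>L" and i: "i < m"
  defines "v \<equiv> p * visits m \<pi>H f i h + (1 - p) * (1 - visits m \<pi>L f i h)"
  shows "v \<le> URR p (gamma \<pi>H \<pi>L) m"
    and "4 \<le> m \<Longrightarrow> kappa p < gamma \<pi>H \<pi>L ^ (m - 2) \<Longrightarrow> v < URR p (gamma \<pi>H \<pi>L) m"
proof -
  have \<gamma>: "1 \<le> gamma \<pi>H \<pi>L ^ (m - 2)"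
    using likelihood_ratio_bounds(3,4)[OF H L neq] by (simp add: gamma_def one_le_power)
  note odds = absorption_odds[OF H L neq i]
  show "v \<le> URR p (gamma \<pi>H \<pi>L) m"
    using odds_value_le_URR(1)[OF p \<gamma>] odds(1,2) unfolding v_def by blast
  show "4 \<le> m \<Longrightarrow> kappa p < gamma \<pi>H \<pi>L ^ (m - 2) \<Longrightarrow> v < URR p (gamma \<pi>H \<pi>L) m"
    using odds_value_le_URR(2)[OF p \<gamma>] odds unfolding v_def by blast
qed

theorem corollary3:
  fixes p :: real and m :: nat
    and \<pi>H \<pi>L :: "'s::finite \<Rightarrow> real"
    and f :: "nat \<Rightarrow> 's \<Rightarrow> nat \<Rightarrow> real" and g a :: "nat \<Rightarrow> real"
    and \<sigma> :: "nat \<Rightarrow> bool \<Rightarrow> real"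
  assumes "0 < p" and "p < 1"
    and "valid_signal_dist \<pi>H" and "valid_signal_dist \<pi>L" and "\<pi>H \<noteq> \<pi>L"
    and "valid_protocol m f g a"
    and "parsimonious m \<pi>H f a"
    and "sender_best_response m \<pi>H \<pi>L f g a \<sigma>"
  shows "receiver_payoff p m \<pi>H \<pi>L f g a \<sigma> \<le> URR p (gamma \<pi>H \<pi>L) m
         \<and> (m \<ge> 4 \<and> gamma \<pi>H \<pi>L ^ (m - 2) > kappa p
              \<longrightarrow> receiver_payoff p m \<pi>H \<pi>L f g a \<sigma> < URR p (gamma \<pi>H \<pi>L) m)"
proof -
  obtain h l where chain: "parsimonious_chain m f h l"
    and a: "a h = 1" "\<And>j. j < m \<Longrightarrow> j \<noteq> h \<Longrightarrow> a j = 0"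
    using parsimonious_chain_of_parsimonious[OF assms(3,6,7)] by blast
  interpret parsimonious_chain m f h l by (rule chain)
  have g: "\<And>j. j < m \<Longrightarrow> 0 \<le> g j" "(\<Sum>j<m. g j) = 1"
    using assms(6) unfolding valid_protocol_def by auto
  let ?v = "\<lambda>i. p * visits m \<pi>H f i h + (1 - p) * (1 - visits m \<pi>L f i h)"
  have payoff: "receiver_payoff p m \<pi>H \<pi>L f g a \<sigma> \<le> (\<Sum>i<m. g i * ?v i)"
    using receiver_payoff_le_average[OF assms(3,4) g a assms(8)] assms(1,2) by simp
  have "(\<Sum>i<m. g i * ?v i) \<le> URR p (gamma \<pi>H \<pi>L) m"
    using g state_value_le_URR(1)[OF assms(1-5)] by (intro weighted_average_le) auto
  moreover have "(\<Sum>i<m. g i * ?v i) < URR p (gamma \<pi>H \<pi>L) m"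
    if "4 \<le> m" "kappa p < gamma \<pi>H \<pi>L ^ (m - 2)"
    using g state_value_le_URR(2)[OF assms(1-5) _ that] by (intro weighted_average_less) auto
  ultimately show ?thesis using payoff by auto
qed

end
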